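(* The functors $\text{Ab}_{\text{Cr}}:\text{CrCom}\to\text{Ch}^+_{\mathbb{Z}}$ and $\text{U}_{\text{Cr}}:\text{Ch}^+_{\mathbb{Z}}\to\text{CrCom}$ form an adjoint pair, with $\text{Ab}_{\text{Cr}}$ left adjoint to $\text{U}_{\text{Cr}}$.
   Context: $\text{Ch}^+_{\mathbb{Z}}$ is the category of nonnegatively graded chain complexes of abelian groups. A crossed complex $C$ consists of: a groupoid with object set $C_0$ and morphism set $C_1$ (source $s$, target $t$); for each $i\ge2$ a family of groups $C_i=\coprod_{c\in C_0}C_i(c)$, abelian for $i>2$, with actions $\phi_\ell:C_i(s(\ell))\to C_i(t(\ell))$ for $\ell\in C_1$ satisfying $\phi_{\ell\circ p}=\phi_\ell\circ\phi_p$; boundary maps $\delta:C_{i+1}\to C_i$ ($\delta:C_2\to C_1$ landing in automorphisms, i.e. $s\delta=t\delta$) compatible with the actions, such that $\delta(a)$ acts on $C_2$ by conjugation by $a$ and trivially on $C_i$, $i>2$, and $\delta^2=0$. Morphisms of crossed complexes (forming $\text{CrCom}$) are the structure-preserving maps. For a chain complex $A_\bullet$ with differential $d$, $\text{U}_{\text{Cr}}(A_\bullet)$ is the crossed complex with $C_0=|A_0|$ (underlying set), $C_1=|A_0|\times|A_1|$ where $(a,\ell)$ is a morphism from $a$ to $a+d\ell$ and composition adds the second components, $C_n=\coprod_{|A_0|}A_n$ for $n\ge2$ with $\delta$ induced by $d$, and with every $(a,\ell)$ acting as the identity map from the $a$-component to the $(a+d\ell)$-component. For a crossed complex $C$, let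 $C_n/C_1=\coprod_{p\in C_0}C_n(p)/\text{Aut}(p)$ be the quotient by the action of the automorphism groups $\text{Aut}(p)\subseteq C_1$; then $\text{Ab}_{\text{Cr}}(C)$ is the chain complex $\mathbb{Z}[C_0]\xleftarrow{t-s}\mathbb{Z}[C_1]/\!\sim\xleftarrow{\delta}C_2/C_1\xleftarrow{\delta}C_3/C_1\leftarrow\cdots$, where $\sim$ is generated by $g\circ f\sim g+f$ for composable $g,f\in C_1$.
   Formalization: For $n\ge2$, degree n of $\text{Ab}_{\text{Cr}}(C)$ is the direct sum over all $p\in C_0$ of the $C_n(p)$ modulo the subgroup generated by all $\phi_\ell(x)-x$ with $\ell\in C_1$, instead of $\coprod_{p\in C_0}C_n(p)/\text{Aut}(p)$. The statement above fails without it. *)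

theory Defs
  imports "HOL-Algebra.Free_Abelian_Groups" "HOL-Algebra.Product_Groups" "HOL-Algebra.Coset"
begin

record 'a chain_cx =
  cgr :: "nat \<Rightarrow> 'a monoid"
  dif :: "nat \<Rightarrow> 'a \<Rightarrow> 'a"

definition chain_complex :: "'a chain_cx \<Rightarrow> bool" where
  "chain_complex A \<longleftrightarrow>
     (\<forall>n. comm_group (cgr A n)) \<and>
     (\<forall>n. dif A n \<in> hom (cgr A (Suc n)) (cgr A n)) \<and>
     (\<forall>n. \<forall>x\<in>carrier (cgr A (Suc (Suc n))). dif A n (dif A (Suc n) x) = \<one>\<^bsub>cgr A n\<^esub>)"

definition chain_map :: "'a chain_cx \<Rightarrow> 'b chain_cx \<Rightarrow> (nat \<Rightarrow> 'a \<Rightarrow> 'b) \<Rightarrow> bool" where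
  "chain_map A B g \<longleftrightarrow>
     (\<forall>n. g n \<in> hom (cgr A n) (cgr B n)) \<and>
     (\<forall>n. \<forall>x\<in>carrier (cgr A (Suc n)). g n (dif A n x) = dif B n (g (Suc n) x))"

text \<open>Objects of type 'o (C_0), morphisms of type 'm (C_1); for n >= 2 and an object c,
  cgrp n c is the group C_n(c) (elements of type 'e; the coproduct over c is encoded by
  indexing everything by the object c).  comp g f is g o f (f first).
  act n l : C_n(s l) -> C_n(t l); bd1 c : C_2(c) -> C_1; bd n c : C_(n+1)(c) -> C_n(c), n >= 2.\<close>
record ('o, 'm, 'e) crossed_cx =
  obj   :: "'o set"
  arr   :: "'m set"
  src   :: "'m \<Rightarrow> 'o"
  tgt   :: "'m \<Rightarrow> 'o"
  comp  :: "'m \<Rightarrow> 'm \<Rightarrow> 'm"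
  ident :: "'o \<Rightarrow> 'm"
  cgrp  :: "nat \<Rightarrow> 'o \<Rightarrow> 'e monoid"
  act   :: "nat \<Rightarrow> 'm \<Rightarrow> 'e \<Rightarrow> 'e"
  bd1   :: "'o \<Rightarrow> 'e \<Rightarrow> 'm"
  bd    :: "nat \<Rightarrow> 'o \<Rightarrow> 'e \<Rightarrow> 'e"

definition groupoid :: "('o, 'm, 'e) crossed_cx \<Rightarrow> bool" where
  "groupoid C \<longleftrightarrow>
     (\<forall>l\<in>arr C. src C l \<in> obj C \<and> tgt C l \<in> obj C) \<and>
     (\<forall>c\<in>obj C. ident C c \<in> arr C \<and> src C (ident C c) = c \<and> tgt C (ident C c) = c) \<and>
     (\<forall>f\<in>arr C. \<forall>g\<in>arr C. tgt C f = src C g \<longrightarrow>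
        comp C g f \<in> arr C \<and> src C (comp C g f) = src C f \<and> tgt C (comp C g f) = tgt C g) \<and>
     (\<forall>f\<in>arr C. \<forall>g\<in>arr C. \<forall>h\<in>arr C. tgt C f = src C g \<longrightarrow> tgt C g = src C h \<longrightarrow>
        comp C h (comp C g f) = comp C (comp C h g) f) \<and>
     (\<forall>f\<in>arr C. comp C (ident C (tgt C f)) f = f \<and> comp C f (ident C (src C f)) = f) \<and>
     (\<forall>f\<in>arr C. \<exists>g\<in>arr C. src C g = tgt C f \<and> tgt C g = src C f \<and>
        comp C g f = ident C (src C f) \<and> comp C f g = ident C (tgt C f))"

definition crossed_complex :: "('o, 'm, 'e) crossed_cx \<Rightarrow> bool" where
  "crossed_complex C \<longleftrightarrow>
     groupoid C \<and>
     (\<forall>n\<ge>2. \<forall>c\<in>obj C. group (cgrp C n c) \<and> (n > 2 \<longrightarrow> comm_group (cgrp C n c))) \<and>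
     \<comment> \<open>actions\<close>
     (\<forall>n\<ge>2. \<forall>l\<in>arr C. act C n l \<in> hom (cgrp C n (src C l)) (cgrp C n (tgt C l))) \<and>
     (\<forall>n\<ge>2. \<forall>f\<in>arr C. \<forall>g\<in>arr C. tgt C f = src C g \<longrightarrow>
        (\<forall>x\<in>carrier (cgrp C n (src C f)). act C n (comp C g f) x = act C n g (act C n f x))) \<and>
     (\<forall>n\<ge>2. \<forall>c\<in>obj C. \<forall>x\<in>carrier (cgrp C n c). act C n (ident C c) x = x) \<and>
     \<comment> \<open>boundary C_2 -> C_1, landing in automorphisms, a homomorphism\<close>
     (\<forall>c\<in>obj C. \<forall>x\<in>carrier (cgrp C 2 c).
        bd1 C c x \<in> arr C \<and> src C (bd1 C c x) = c \<and> tgt C (bd1 C c x) = c) \<and>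
     (\<forall>c\<in>obj C. \<forall>x\<in>carrier (cgrp C 2 c). \<forall>y\<in>carrier (cgrp C 2 c).
        bd1 C c (x \<otimes>\<^bsub>cgrp C 2 c\<^esub> y) = comp C (bd1 C c x) (bd1 C c y)) \<and>
     \<comment> \<open>higher boundaries\<close>
     (\<forall>n\<ge>2. \<forall>c\<in>obj C. bd C n c \<in> hom (cgrp C (Suc n) c) (cgrp C n c)) \<and>
     \<comment> \<open>compatibility of boundaries with the actions\<close>
     (\<forall>l\<in>arr C. \<forall>x\<in>carrier (cgrp C 2 (src C l)).
        comp C (bd1 C (tgt C l) (act C 2 l x)) l = comp C l (bd1 C (src C l) x)) \<and>
     (\<forall>n\<ge>2. \<forall>l\<in>arr C. \<forall>x\<in>carrier (cgrp C (Suc n) (src C l)).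
        bd C n (tgt C l) (act C (Suc n) l x) = act C n l (bd C n (src C l) x)) \<and>
     \<comment> \<open>delta(a) acts on C_2 by conjugation by a and trivially on C_i, i > 2\<close>
     (\<forall>c\<in>obj C. \<forall>a\<in>carrier (cgrp C 2 c). \<forall>b\<in>carrier (cgrp C 2 c).
        act C 2 (bd1 C c a) b = a \<otimes>\<^bsub>cgrp C 2 c\<^esub> b \<otimes>\<^bsub>cgrp C 2 c\<^esub> inv\<^bsub>cgrp C 2 c\<^esub> a) \<and>
     (\<forall>n>2. \<forall>c\<in>obj C. \<forall>a\<in>carrier (cgrp C 2 c). \<forall>b\<in>carrier (cgrp C n c).
        act C n (bd1 C c a) b = b) \<and>
     \<comment> \<open>delta o delta = 0\<close>
     (\<forall>c\<in>obj C. \<forall>x\<in>carrier (cgrp C 3 c). bd1 C c (bd C 2 c x) = ident C c) \<and>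
     (\<forall>n\<ge>2. \<forall>c\<in>obj C. \<forall>x\<in>carrier (cgrp C (Suc (Suc n)) c).
        bd C n c (bd C (Suc n) c x) = \<one>\<^bsub>cgrp C n c\<^esub>)"

record ('o, 'm, 'e, 'p, 'n, 'f) cr_mor =
  mo :: "'o \<Rightarrow> 'p"
  mm :: "'m \<Rightarrow> 'n"
  me :: "nat \<Rightarrow> 'o \<Rightarrow> 'e \<Rightarrow> 'f"

definition cr_morphism ::
  "('o, 'm, 'e) crossed_cx \<Rightarrow> ('p, 'n, 'f) crossed_cx \<Rightarrow> ('o, 'm, 'e, 'p, 'n, 'f) cr_mor \<Rightarrow> bool" where
  "cr_morphism C D F \<longleftrightarrow>
     (\<forall>c\<in>obj C. mo F c \<in> obj D) \<and>
     (\<forall>l\<in>arr C. mm F l \<in> arr D \<and> src D (mm F l) = mo F (src C l) \<and> tgt D (mm F l) = mo F (tgt C l)) \<and>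
     (\<forall>f\<in>arr C. \<forall>g\<in>arr C. tgt C f = src C g \<longrightarrow> mm F (comp C g f) = comp D (mm F g) (mm F f)) \<and>
     (\<forall>c\<in>obj C. mm F (ident C c) = ident D (mo F c)) \<and>
     (\<forall>n\<ge>2. \<forall>c\<in>obj C. me F n c \<in> hom (cgrp C n c) (cgrp D n (mo F c))) \<and>
     (\<forall>n\<ge>2. \<forall>l\<in>arr C. \<forall>x\<in>carrier (cgrp C n (src C l)).
        me F n (tgt C l) (act C n l x) = act D n (mm F l) (me F n (src C l) x)) \<and>
     (\<forall>c\<in>obj C. \<forall>x\<in>carrier (cgrp C 2 c). mm F (bd1 C c x) = bd1 D (mo F c) (me F 2 c x)) \<and>
     (\<forall>n\<ge>2. \<forall>c\<in>obj C. \<forall>x\<in>carrier (cgrp C (Suc n) c).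
        me F n c (bd C n c x) = bd D n (mo F c) (me F (Suc n) c x))"

definition cr_mor_eq ::
  "('o, 'm, 'e) crossed_cx \<Rightarrow> ('o, 'm, 'e, 'p, 'n, 'f) cr_mor \<Rightarrow> ('o, 'm, 'e, 'p, 'n, 'f) cr_mor \<Rightarrow> bool" where
  "cr_mor_eq C F G \<longleftrightarrow>
     (\<forall>c\<in>obj C. mo F c = mo G c) \<and> (\<forall>l\<in>arr C. mm F l = mm G l) \<and>
     (\<forall>n\<ge>2. \<forall>c\<in>obj C. \<forall>x\<in>carrier (cgrp C n c). me F n c x = me G n c x)"

definition cr_mor_comp ::
  "('p, 'n, 'f, 'q, 'r, 'g) cr_mor \<Rightarrow> ('o, 'm, 'e, 'p, 'n, 'f) cr_mor \<Rightarrow> ('o, 'm, 'e, 'q, 'r, 'g) cr_mor" where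
  "cr_mor_comp G F = \<lparr>mo = mo G \<circ> mo F, mm = mm G \<circ> mm F, me = (\<lambda>n c. me G n (mo F c) \<circ> me F n c)\<rparr>"

definition U_Cr :: "'a chain_cx \<Rightarrow> ('a, 'a \<times> 'a, 'a) crossed_cx" where
  "U_Cr A = \<lparr>obj = carrier (cgr A 0),
             arr = carrier (cgr A 0) \<times> carrier (cgr A 1),
             src = fst,
             tgt = (\<lambda>(a, l). a \<otimes>\<^bsub>cgr A 0\<^esub> dif A 0 l),
             comp = (\<lambda>(b, m) (a, l). (a, l \<otimes>\<^bsub>cgr A 1\<^esub> m)),
             ident = (\<lambda>a. (a, \<one>\<^bsub>cgr A 1\<^esub>)),
             cgrp = (\<lambda>n c. cgr A n),
             act = (\<lambda>n l x. x),
             bd1 = (\<lambda>c x. (c, dif A 1 x)),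
             bd = (\<lambda>n c. dif A n)\<rparr>"

definition U_mor :: "(nat \<Rightarrow> 'a \<Rightarrow> 'b) \<Rightarrow> ('a, 'a \<times> 'a, 'a, 'b, 'b \<times> 'b, 'b) cr_mor" where
  "U_mor g = \<lparr>mo = g 0, mm = (\<lambda>(a, l). (g 0 a, g 1 l)), me = (\<lambda>n c. g n)\<rparr>"

definition transport :: "('a \<Rightarrow> 'b) \<Rightarrow> ('a, 'c) monoid_scheme \<Rightarrow> 'b monoid" where
  "transport h G = \<lparr>carrier = h ` carrier G,
     mult = (\<lambda>x y. h (the_inv_into (carrier G) h x \<otimes>\<^bsub>G\<^esub> the_inv_into (carrier G) h y)),
     one = h \<one>\<^bsub>G\<^esub>\<rparr>"

definition Z0 :: "('o, 'm, 'e) crossed_cx \<Rightarrow> ('o \<Rightarrow>\<^sub>0 int) monoid" where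
  "Z0 C = free_Abelian_group (obj C)"

definition Z1 :: "('o, 'm, 'e) crossed_cx \<Rightarrow> ('m \<Rightarrow>\<^sub>0 int) monoid" where
  "Z1 C = free_Abelian_group (arr C)"

definition N1 :: "('o, 'm, 'e) crossed_cx \<Rightarrow> ('m \<Rightarrow>\<^sub>0 int) set" where
  "N1 C = generate (Z1 C)
     {frag_of (comp C g f) - frag_of g - frag_of f | f g. f \<in> arr C \<and> g \<in> arr C \<and> tgt C f = src C g}"

definition Q1 :: "('o, 'm, 'e) crossed_cx \<Rightarrow> ('m \<Rightarrow>\<^sub>0 int) set monoid" where
  "Q1 C = Z1 C Mod N1 C"

definition Sn :: "nat \<Rightarrow> ('o, 'm, 'e) crossed_cx \<Rightarrow> ('o \<Rightarrow> 'e) monoid" where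
  "Sn n C = sum_group (obj C) (cgrp C n)"

definition inj_c :: "nat \<Rightarrow> ('o, 'm, 'e) crossed_cx \<Rightarrow> 'o \<Rightarrow> 'e \<Rightarrow> ('o \<Rightarrow> 'e)" where
  "inj_c n C c x = (\<lambda>p\<in>obj C. if p = c then x else \<one>\<^bsub>cgrp C n p\<^esub>)"

definition Nn :: "nat \<Rightarrow> ('o, 'm, 'e) crossed_cx \<Rightarrow> ('o \<Rightarrow> 'e) set" where
  "Nn n C = generate (Sn n C)
     {inj_c n C (tgt C l) (act C n l x) \<otimes>\<^bsub>Sn n C\<^esub> inv\<^bsub>Sn n C\<^esub> (inj_c n C (src C l) x) | l x.
        l \<in> arr C \<and> x \<in> carrier (cgrp C n (src C l))}"

definition Qn :: "nat \<Rightarrow> ('o, 'm, 'e) crossed_cx \<Rightarrow> ('o \<Rightarrow> 'e) set monoid" where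
  "Qn n C = Sn n C Mod Nn n C"

type_synonym ('o, 'm, 'e) ab_elt = "('o \<Rightarrow>\<^sub>0 int) + ('m \<Rightarrow>\<^sub>0 int) set + ('o \<Rightarrow> 'e) set"

definition un1 :: "('o, 'm, 'e) ab_elt \<Rightarrow> ('m \<Rightarrow>\<^sub>0 int) set" where
  "un1 y = (case y of Inr (Inl X) \<Rightarrow> X | _ \<Rightarrow> {})"

definition unn :: "('o, 'm, 'e) ab_elt \<Rightarrow> ('o \<Rightarrow> 'e) set" where
  "unn y = (case y of Inr (Inr X) \<Rightarrow> X | _ \<Rightarrow> {})"

text \<open>The differentials, computed on (arbitrarily chosen) representatives of cosets.\<close>
definition ab_d0 :: "('o, 'm, 'e) crossed_cx \<Rightarrow> ('m \<Rightarrow>\<^sub>0 int) \<Rightarrow> ('o \<Rightarrow>\<^sub>0 int)" where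
  "ab_d0 C z = frag_extend (\<lambda>l. frag_of (tgt C l) - frag_of (src C l)) z"

definition ab_d1 :: "('o, 'm, 'e) crossed_cx \<Rightarrow> ('o \<Rightarrow> 'e) \<Rightarrow> ('m \<Rightarrow>\<^sub>0 int)" where
  "ab_d1 C x = (\<Sum>p\<in>{p \<in> obj C. x p \<noteq> \<one>\<^bsub>cgrp C 2 p\<^esub>}. frag_of (bd1 C p (x p)))"

definition ab_dn :: "nat \<Rightarrow> ('o, 'm, 'e) crossed_cx \<Rightarrow> ('o \<Rightarrow> 'e) \<Rightarrow> ('o \<Rightarrow> 'e)" where
  "ab_dn n C x = (\<lambda>p\<in>obj C. bd C n p (x p))"

definition Ab_Cr :: "('o, 'm, 'e) crossed_cx \<Rightarrow> ('o, 'm, 'e) ab_elt chain_cx" where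
  "Ab_Cr C = \<lparr>cgr = (\<lambda>n. if n = 0 then transport Inl (Z0 C)
                        else if n = 1 then transport (Inr \<circ> Inl) (Q1 C)
                        else transport (Inr \<circ> Inr) (Qn n C)),
              dif = (\<lambda>n y. if n = 0 then Inl (ab_d0 C (SOME z. z \<in> un1 y))
                          else if n = 1 then Inr (Inl (N1 C #>\<^bsub>Z1 C\<^esub> ab_d1 C (SOME x. x \<in> unn y)))
                          else Inr (Inr (Nn n C #>\<^bsub>Sn n C\<^esub> ab_dn n C (SOME x. x \<in> unn y))))\<rparr>"

definition cr_unit :: "('o, 'm, 'e) crossed_cx \<Rightarrow>
    ('o, 'm, 'e, ('o, 'm, 'e) ab_elt, ('o, 'm, 'e) ab_elt \<times> ('o, 'm, 'e) ab_elt, ('o, 'm, 'e) ab_elt) cr_mor" where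
  "cr_unit C = \<lparr>mo = (\<lambda>c. Inl (frag_of c)),
                mm = (\<lambda>l. (Inl (frag_of (src C l)), Inr (Inl (N1 C #>\<^bsub>Z1 C\<^esub> frag_of l)))),
                me = (\<lambda>n c x. Inr (Inr (Nn n C #>\<^bsub>Sn n C\<^esub> inj_c n C c x)))\<rparr>"

end

(*
  U_Cr A is a crossed complex because all of its actions are trivial and all of its groups
  are abelian.  Conversely, Ab_Cr C abelianises C degreewise: the free abelian group on the
  objects, the free abelian group on the arrows modulo g o f = g + f, and in degree n >= 2
  the coinvariants of the direct sum of the groups C_n(p) under the groupoid action.  These
  coinvariants are abelian even for n = 2, since there the commutator of a and b is the
  relation delta(a) . b . b^-1.

  A morphism F : C -> U_Cr A is a functor into the action groupoid of A_1 on A_0, which is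
  additive on composites, together with action-invariant homomorphisms C_n(p) -> A_n.  The
  universal properties of free abelian groups, direct sums and quotients extend these data
  to homomorphisms out of Ab_Cr C, and uniquely so, since the images of the unit generate
  Ab_Cr C in every degree.  The chain map identities hold because they hold on these
  generators, where they are exactly the axioms of a morphism of crossed complexes.
*)

theory Submission
  imports Defs
begin

lemma hom_inv_eq:
  "f \<in> hom G H \<Longrightarrow> group G \<Longrightarrow> group H \<Longrightarrow> x \<in> carrier G \<Longrightarrow> f (inv\<^bsub>G\<^esub> x) = inv\<^bsub>H\<^esub> f x"
  by (simp add: group_hom_def group_hom_axioms_def group_hom.hom_inv)

lemma hom_trivial_on_generate:
  assumes G: "group G" and H: "group H" and f: "f \<in> hom G H" and S: "S \<subseteq> carrier G"
    and triv: "\<And>s. s \<in> S \<Longrightarrow> f s = \<one>\<^bsub>H\<^esub>" and x: "x \<in> generate G S"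
  shows "f x = \<one>\<^bsub>H\<^esub>"
proof -
  interpret group_hom G H f
    using G H f by (simp add: group_hom_def group_hom_axioms_def)
  have "f ` generate G S = generate H (f ` S)"
    using generate_img[OF S] by simp
  also have "\<dots> \<subseteq> {\<one>\<^bsub>H\<^esub>}"
    using triv by (intro H.generate_subgroup_incl H.triv_subgroup) auto
  finally show ?thesis using x by blast
qed

lemma equalizer_subgroup:
  assumes G: "group G" and H: "group H" and f: "f \<in> hom G H" and g: "g \<in> hom G H"
  shows "subgroup {x \<in> carrier G. f x = g x} G"
proof -
  interpret G: group G by (rule G)
  interpret f: group_hom G H f using G H f by (simp add: group_hom_def group_hom_axioms_def)
  interpret g: group_hom G H g using G H g by (simp add: group_hom_def group_hom_axioms_def)
  show ?thesis
    by (rule G.subgroupI) (auto simp: f.hom_mult g.hom_mult f.hom_inv g.hom_inv)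
qed

lemma free_Abelian_group_hom_eqI:
  assumes H: "group H" and f: "f \<in> hom (free_Abelian_group S) H" and g: "g \<in> hom (free_Abelian_group S) H"
    and eq: "\<And>s. s \<in> S \<Longrightarrow> f (frag_of s) = g (frag_of s)"
    and x: "x \<in> carrier (free_Abelian_group S)"
  shows "f x = g x"
proof -
  let ?E = "{x \<in> carrier (free_Abelian_group S). f x = g x}"
  interpret E: subgroup ?E "free_Abelian_group S"
    by (rule equalizer_subgroup[OF group_free_Abelian_group H f g])
  have "Poly_Mapping.keys x \<subseteq> S" using x by simp
  then have "x \<in> ?E"
  proof (rule free_Abelian_group_induct)
    fix x y assume "x \<in> ?E" "y \<in> ?E"
    then have "x \<otimes>\<^bsub>free_Abelian_group S\<^esub> inv\<^bsub>free_Abelian_group S\<^esub> y \<in> ?E"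
      by (intro E.m_closed E.m_inv_closed)
    then show "x - y \<in> ?E" using \<open>x \<in> ?E\<close> \<open>y \<in> ?E\<close> by simp
  qed (use E.one_closed eq in auto)
  then show ?thesis by simp
qed

lemma hom_free_Abelian_group_diff:
  assumes "\<phi> \<in> hom (free_Abelian_group S) H" "group H"
    and "Poly_Mapping.keys x \<subseteq> S" "Poly_Mapping.keys y \<subseteq> S"
  shows "\<phi> (x - y) = \<phi> x \<otimes>\<^bsub>H\<^esub> inv\<^bsub>H\<^esub> \<phi> y"
proof -
  let ?F = "free_Abelian_group S"
  have "\<phi> (x - y) = \<phi> (x \<otimes>\<^bsub>?F\<^esub> inv\<^bsub>?F\<^esub> y)"
    using assms by simp
  also have "\<dots> = \<phi> x \<otimes>\<^bsub>H\<^esub> \<phi> (inv\<^bsub>?F\<^esub> y)"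
    by (rule hom_mult[OF assms(1)]) (use assms in simp_all)
  also have "\<dots> = \<phi> x \<otimes>\<^bsub>H\<^esub> inv\<^bsub>H\<^esub> \<phi> y"
    by (subst hom_inv_eq[OF assms(1) group_free_Abelian_group assms(2)]) (use assms in simp_all)
  finally show ?thesis .
qed

lemma keys_diff_subset:
  "Poly_Mapping.keys x \<subseteq> S \<Longrightarrow> Poly_Mapping.keys y \<subseteq> S \<Longrightarrow> Poly_Mapping.keys (x - y) \<subseteq> S"
  by (meson keys_diff le_supI order_trans)

definition free_lift :: "('b, 'c) monoid_scheme \<Rightarrow> 'a set \<Rightarrow> ('a \<Rightarrow> 'b) \<Rightarrow> ('a \<Rightarrow>\<^sub>0 int) \<Rightarrow> 'b" where
  "free_lift H S h = (SOME \<phi>. \<phi> \<in> hom (free_Abelian_group S) H \<and> (\<forall>s\<in>S. \<phi> (frag_of s) = h s))"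

lemma
  assumes "comm_group H" and "h ` S \<subseteq> carrier H"
  shows free_lift_hom: "free_lift H S h \<in> hom (free_Abelian_group S) H"
    and free_lift_frag_of: "s \<in> S \<Longrightarrow> free_lift H S h (frag_of s) = h s"
proof -
  have "\<exists>\<phi>. \<phi> \<in> hom (free_Abelian_group S) H \<and> (\<forall>s\<in>S. \<phi> (frag_of s) = h s)"
    using comm_group.free_Abelian_group_universal[OF assms] by metis
  then have "free_lift H S h \<in> hom (free_Abelian_group S) H \<and> (\<forall>s\<in>S. free_lift H S h (frag_of s) = h s)"
    unfolding free_lift_def by (rule someI_ex)
  then show "free_lift H S h \<in> hom (free_Abelian_group S) H" "s \<in> S \<Longrightarrow> free_lift H S h (frag_of s) = h s"
    by auto
qed

lemma transport_carrier: "carrier (transport h G) = h ` carrier G"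
  by (simp add: transport_def)

lemma transport_one: "\<one>\<^bsub>transport h G\<^esub> = h \<one>\<^bsub>G\<^esub>"
  by (simp add: transport_def)

lemma transport_mult:
  assumes "inj h" "a \<in> carrier G" "b \<in> carrier G"
  shows "h a \<otimes>\<^bsub>transport h G\<^esub> h b = h (a \<otimes>\<^bsub>G\<^esub> b)"
  using assms by (simp add: transport_def the_inv_into_f_f inj_on_subset)

lemma transport_hom_in: "inj h \<Longrightarrow> h \<in> hom G (transport h G)"
  by (rule homI) (auto simp: transport_carrier transport_mult)

lemma comm_group_transport:
  assumes h: "inj h" and G: "comm_group G" shows "comm_group (transport h G)"
proof -
  interpret G: comm_group G by (rule G)
  have "group (transport h G)"
  proof (rule groupI)
    fix x assume "x \<in> carrier (transport h G)"
    then obtain a where "a \<in> carrier G" "x = h a" by (auto simp: transport_carrier)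
    then show "\<exists>y\<in>carrier (transport h G). y \<otimes>\<^bsub>transport h G\<^esub> x = \<one>\<^bsub>transport h G\<^esub>"
      by (intro bexI[of _ "h (inv\<^bsub>G\<^esub> a)"]) (auto simp: transport_carrier transport_one transport_mult[OF h])
  qed (auto simp: transport_carrier transport_one transport_mult[OF h] G.m_assoc)
  then show ?thesis
    by (rule group.group_comm_groupI) (auto simp: transport_carrier transport_mult[OF h] G.m_comm)
qed

lemma hom_transport_iff:
  assumes h: "inj h" and G: "group G"
  shows "f \<in> hom (transport h G) K \<longleftrightarrow> (\<lambda>a. f (h a)) \<in> hom G K"
proof
  assume f: "f \<in> hom (transport h G) K"
  show "(\<lambda>a. f (h a)) \<in> hom G K"
    using hom_compose[OF transport_hom_in[OF h] f] unfolding o_def .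
next
  assume f: "(\<lambda>a. f (h a)) \<in> hom G K"
  show "f \<in> hom (transport h G) K"
  proof (rule homI)
    fix x assume "x \<in> carrier (transport h G)"
    then show "f x \<in> carrier K" using f by (auto simp: transport_carrier hom_def)
  next
    fix x y assume "x \<in> carrier (transport h G)" "y \<in> carrier (transport h G)"
    then obtain a b where "a \<in> carrier G" "b \<in> carrier G" "x = h a" "y = h b"
      by (auto simp: transport_carrier)
    then show "f (x \<otimes>\<^bsub>transport h G\<^esub> y) = f x \<otimes>\<^bsub>K\<^esub> f y"
      using hom_mult[OF f] by (simp add: transport_mult[OF h])
  qed
qed

lemma hom_transport_transport:
  assumes h: "inj h" and h': "inj h'" and G: "group G" and \<phi>: "\<phi> \<in> hom G H"
    and f: "\<And>a. a \<in> carrier G \<Longrightarrow> f (h a) = h' (\<phi> a)"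
  shows "f \<in> hom (transport h G) (transport h' H)"
  unfolding hom_transport_iff[OF h G]
  by (rule group.hom_restrict[OF G hom_compose[OF \<phi> transport_hom_in[OF h']]]) (simp add: f)

text \<open>\<open>Ab_Cr\<close> evaluates its differentials on a representative of a coset chosen by \<open>SOME\<close>.\<close>

lemma FactGroup_some_rep:
  assumes G: "group G" and H: "group H" and N: "subgroup N G" and f: "f \<in> hom G H"
    and ker: "\<And>x. x \<in> N \<Longrightarrow> f x = \<one>\<^bsub>H\<^esub>" and a: "a \<in> carrier G"
  shows "f (SOME x. x \<in> N #>\<^bsub>G\<^esub> a) = f a"
proof -
  interpret G: group G by (rule G)
  have "(SOME x. x \<in> N #>\<^bsub>G\<^esub> a) \<in> N #>\<^bsub>G\<^esub> a"
    by (rule someI[of "\<lambda>x. x \<in> N #>\<^bsub>G\<^esub> a", OF G.rcos_self[OF a N]])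
  then obtain x where "x \<in> N" "(SOME x. x \<in> N #>\<^bsub>G\<^esub> a) = x \<otimes>\<^bsub>G\<^esub> a"
    by (auto simp: r_coset_def)
  moreover have "f a \<in> carrier H" using f a by (rule hom_in_carrier)
  ultimately show ?thesis
    using f a ker subgroup.mem_carrier[OF N] H by (simp add: hom_mult group.is_monoid)
qed

lemma hom_FactGroup_some:
  assumes G: "group G" and H: "group H" and N: "N \<lhd> G" and f: "f \<in> hom G H"
    and ker: "\<And>x. x \<in> N \<Longrightarrow> f x = \<one>\<^bsub>H\<^esub>"
  shows "(\<lambda>X. f (SOME x. x \<in> X)) \<in> hom (G Mod N) H"
proof -
  interpret N: normal N G by (rule N)
  note rep = FactGroup_some_rep[OF G H N.subgroup_axioms f ker]
  show ?thesis
  proof (rule homI)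
    fix X assume "X \<in> carrier (G Mod N)"
    then show "f (SOME x. x \<in> X) \<in> carrier H"
      using rep hom_in_carrier[OF f] by (auto simp: carrier_FactGroup)
  next
    fix X Y assume "X \<in> carrier (G Mod N)" "Y \<in> carrier (G Mod N)"
    then obtain a b where "a \<in> carrier G" "X = N #>\<^bsub>G\<^esub> a" "b \<in> carrier G" "Y = N #>\<^bsub>G\<^esub> b"
      by (auto simp: carrier_FactGroup)
    then show "f (SOME x. x \<in> X \<otimes>\<^bsub>G Mod N\<^esub> Y) = f (SOME x. x \<in> X) \<otimes>\<^bsub>H\<^esub> f (SOME x. x \<in> Y)"
      using rep f by (simp add: N.rcos_sum hom_mult)
  qed
qed

lemma rcos_eqI:
  assumes G: "group G" and N: "subgroup N G" and a: "a \<in> carrier G" and b: "b \<in> carrier G"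
    and ab: "a \<otimes>\<^bsub>G\<^esub> inv\<^bsub>G\<^esub> b \<in> N"
  shows "N #>\<^bsub>G\<^esub> a = N #>\<^bsub>G\<^esub> b"
  using group.repr_independence[OF G subgroup.rcos_module_rev[OF N G b a ab] b N] by simp

lemma
  assumes G: "group G" and N: "subgroup N G"
    and commutators: "\<And>x y. x \<in> carrier G \<Longrightarrow> y \<in> carrier G \<Longrightarrow>
          x \<otimes>\<^bsub>G\<^esub> y \<otimes>\<^bsub>G\<^esub> inv\<^bsub>G\<^esub> x \<otimes>\<^bsub>G\<^esub> inv\<^bsub>G\<^esub> y \<in> N"
  shows normal_if_contains_commutators: "N \<lhd> G"
    and comm_group_FactGroup_if_contains_commutators: "comm_group (G Mod N)"
proof -
  interpret G: group G by (rule G)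
  interpret N: subgroup N G by (rule N)
  show normal: "N \<lhd> G"
  proof (rule G.normal_invI[OF N])
    fix x h assume x: "x \<in> carrier G" and h: "h \<in> N"
    have "x \<otimes>\<^bsub>G\<^esub> h \<otimes>\<^bsub>G\<^esub> inv\<^bsub>G\<^esub> x = (x \<otimes>\<^bsub>G\<^esub> h \<otimes>\<^bsub>G\<^esub> inv\<^bsub>G\<^esub> x \<otimes>\<^bsub>G\<^esub> inv\<^bsub>G\<^esub> h) \<otimes>\<^bsub>G\<^esub> h"
      using x h by (simp add: G.m_assoc)
    also have "\<dots> \<in> N" using commutators[OF x] h by simp
    finally show "x \<otimes>\<^bsub>G\<^esub> h \<otimes>\<^bsub>G\<^esub> inv\<^bsub>G\<^esub> x \<in> N" .
  qed
  interpret N: normal N G by (rule normal)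
  show "comm_group (G Mod N)"
  proof (rule group.group_comm_groupI[OF N.factorgroup_is_group])
    fix X Y assume "X \<in> carrier (G Mod N)" "Y \<in> carrier (G Mod N)"
    then obtain a b where ab: "a \<in> carrier G" "X = N #>\<^bsub>G\<^esub> a" "b \<in> carrier G" "Y = N #>\<^bsub>G\<^esub> b"
      by (auto simp: carrier_FactGroup)
    have "N #>\<^bsub>G\<^esub> (a \<otimes>\<^bsub>G\<^esub> b) = N #>\<^bsub>G\<^esub> (b \<otimes>\<^bsub>G\<^esub> a)"
      by (rule rcos_eqI[OF G N]) (use ab commutators in \<open>simp_all add: G.inv_mult_group G.m_assoc\<close>)
    then show "X \<otimes>\<^bsub>G Mod N\<^esub> Y = Y \<otimes>\<^bsub>G Mod N\<^esub> X"
      using ab by (simp add: N.rcos_sum)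
  qed
qed

definition sum_group_inj :: "'i set \<Rightarrow> ('i \<Rightarrow> ('b, 'c) monoid_scheme) \<Rightarrow> 'i \<Rightarrow> 'b \<Rightarrow> 'i \<Rightarrow> 'b" where
  "sum_group_inj I G i a = (\<lambda>p\<in>I. if p = i then a else \<one>\<^bsub>G p\<^esub>)"

definition sum_group_lift :: "'i set \<Rightarrow> ('b, 'c) monoid_scheme \<Rightarrow> ('i \<Rightarrow> 'a \<Rightarrow> 'b) \<Rightarrow> ('i \<Rightarrow> 'a) \<Rightarrow> 'b" where
  "sum_group_lift I H f x = gfinprod H (\<lambda>i. f i (x i)) I"

context
  fixes I :: "'i set" and G :: "'i \<Rightarrow> ('b, 'c) monoid_scheme"
  assumes grp: "\<And>i. i \<in> I \<Longrightarrow> group (G i)"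
begin

lemma sum_group_inj_hom: "i \<in> I \<Longrightarrow> sum_group_inj I G i \<in> hom (G i) (sum_group I G)"
proof (rule homI)
  fix a assume i: "i \<in> I" and a: "a \<in> carrier (G i)"
  have "{p \<in> I. sum_group_inj I G i a p \<noteq> \<one>\<^bsub>G p\<^esub>} \<subseteq> {i}"
    by (auto simp: sum_group_inj_def)
  then show "sum_group_inj I G i a \<in> carrier (sum_group I G)"
    using i a grp by (auto simp: carrier_sum_group sum_group_inj_def finite_subset group.is_monoid)
qed (use grp in \<open>auto simp: sum_group_inj_def fun_eq_iff group.is_monoid\<close>)

lemma sum_group_strip_component:
  assumes x: "x \<in> carrier (sum_group I G)" and a: "a \<in> I"
  obtains x' where "x' \<in> carrier (sum_group I G)" "x = sum_group_inj I G a (x a) \<otimes>\<^bsub>sum_group I G\<^esub> x'"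
    and "\<And>p. p \<in> I \<Longrightarrow> x' p = (if p = a then \<one>\<^bsub>G p\<^esub> else x p)"
proof
  interpret S: group "sum_group I G" by (rule sum_group[OF grp])
  have xa: "x a \<in> carrier (G a)" using x a by (auto simp: carrier_sum_group[OF grp])
  have inj_a: "sum_group_inj I G a (x a) \<in> carrier (sum_group I G)"
    using hom_in_carrier[OF sum_group_inj_hom[OF a] xa] .
  let ?x' = "inv\<^bsub>sum_group I G\<^esub> sum_group_inj I G a (x a) \<otimes>\<^bsub>sum_group I G\<^esub> x"
  show "?x' \<in> carrier (sum_group I G)"
    using inj_a x by (intro S.m_closed S.inv_closed)
  show "x = sum_group_inj I G a (x a) \<otimes>\<^bsub>sum_group I G\<^esub> ?x'"
    using inj_a x by (simp add: S.m_assoc[symmetric] del: mult_sum_group one_sum_group)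
  fix p assume p: "p \<in> I"
  have "x p \<in> carrier (G p)" using x p by (auto simp: carrier_sum_group[OF grp])
  then show "?x' p = (if p = a then \<one>\<^bsub>G p\<^esub> else x p)"
    using p xa grp[OF p] inj_a
    by (auto simp: sum_group_inj_def inv_sum_group[OF grp] group.l_inv monoid.inv_one
                   monoid.l_one group.is_monoid)
qed

lemma sum_group_in_subgroup:
  assumes K: "subgroup K (sum_group I G)" and x: "x \<in> carrier (sum_group I G)"
    and inj: "\<And>i. i \<in> I \<Longrightarrow> sum_group_inj I G i (x i) \<in> K"
  shows "x \<in> K"
proof -
  interpret S: group "sum_group I G" by (rule sum_group[OF grp])
  interpret K: subgroup K "sum_group I G" by (rule K)
  have "x \<in> K" if "finite F" "x \<in> carrier (sum_group I G)" "{i \<in> I. x i \<noteq> \<one>\<^bsub>G i\<^esub>} \<subseteq> F"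
    "\<And>i. i \<in> I \<Longrightarrow> sum_group_inj I G i (x i) \<in> K" for F x
    using that
  proof (induction F arbitrary: x rule: finite_induct)
    case empty
    then have "x = \<one>\<^bsub>sum_group I G\<^esub>"
      by (auto simp: carrier_sum_group[OF grp] fun_eq_iff PiE_def extensional_def)
    then show ?case using K.one_closed by (simp add: restrict_def)
  next
    case (insert a F)
    show ?case
    proof (cases "a \<in> I")
      case False
      then show ?thesis using insert by blast
    next
      case a: True
      obtain x' where x': "x' \<in> carrier (sum_group I G)" "x = sum_group_inj I G a (x a) \<otimes>\<^bsub>sum_group I G\<^esub> x'"
        and x'_eq: "\<And>p. p \<in> I \<Longrightarrow> x' p = (if p = a then \<one>\<^bsub>G p\<^esub> else x p)"
        using sum_group_strip_component[OF insert.prems(1) a] by blast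
      have "{i \<in> I. x' i \<noteq> \<one>\<^bsub>G i\<^esub>} \<subseteq> F"
        using insert.prems x'_eq by (auto split: if_split_asm)
      moreover have "sum_group_inj I G i (x' i) \<in> K" if "i \<in> I" for i
        using that x'_eq insert.prems hom_one[OF sum_group_inj_hom[OF a] grp[OF a] S.is_group] K.one_closed
        by (cases "i = a") (auto simp del: one_sum_group)
      ultimately have "x' \<in> K" using insert.IH x'(1) by blast
      then show ?thesis using x'(2) insert.prems a by (metis K.m_closed)
    qed
  qed
  then show ?thesis using x inj by (auto simp: carrier_sum_group[OF grp])
qed

lemma sum_group_hom_eqI:
  assumes H: "group H" and f: "f \<in> hom (sum_group I G) H" and g: "g \<in> hom (sum_group I G) H"
    and eq: "\<And>i a. i \<in> I \<Longrightarrow> a \<in> carrier (G i) \<Longrightarrow> f (sum_group_inj I G i a) = g (sum_group_inj I G i a)"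
    and x: "x \<in> carrier (sum_group I G)"
  shows "f x = g x"
proof -
  have "x \<in> {x \<in> carrier (sum_group I G). f x = g x}"
  proof (rule sum_group_in_subgroup[OF equalizer_subgroup[OF sum_group[OF grp] H f g] x])
    fix i assume i: "i \<in> I"
    have "x i \<in> carrier (G i)" using x i by (auto simp: carrier_sum_group[OF grp])
    then show "sum_group_inj I G i (x i) \<in> {x \<in> carrier (sum_group I G). f x = g x}"
      using eq[OF i] hom_in_carrier[OF sum_group_inj_hom[OF i]] by simp
  qed
  then show ?thesis by blast
qed

lemma sum_group_lift_hom:
  "comm_group H \<Longrightarrow> (\<And>i. i \<in> I \<Longrightarrow> f i \<in> hom (G i) H) \<Longrightarrow> sum_group_lift I H f \<in> hom (sum_group I G) H"
  unfolding sum_group_lift_def[abs_def] by (rule comm_group.hom_group_sum) (use grp in auto)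

lemma sum_group_lift_inj:
  assumes H: "comm_group H" and f: "\<And>i. i \<in> I \<Longrightarrow> f i \<in> hom (G i) H"
    and i: "i \<in> I" and a: "a \<in> carrier (G i)"
  shows "sum_group_lift I H f (sum_group_inj I G i a) = f i a"
proof -
  interpret H: comm_group H by (rule H)
  have one: "f p \<one>\<^bsub>G p\<^esub> = \<one>\<^bsub>H\<^esub>" if "p \<in> I" for p
    using group_hom.hom_one[of "G p" H "f p"] grp[OF that] f[OF that]
    by (simp add: group_hom_def group_hom_axioms_def H.is_group)
  have fa: "f i a \<in> carrier H" using hom_in_carrier[OF f[OF i] a] .
  have "sum_group_lift I H f (sum_group_inj I G i a) = gfinprod H (\<lambda>p. f p (sum_group_inj I G i a p)) {i}"
    unfolding sum_group_lift_def
    by (rule H.gfinprod_mono_neutral_cong_right) (use i one fa in \<open>auto simp: sum_group_inj_def\<close>)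
  also have "\<dots> = f i a"
    using fa i by (simp add: sum_group_inj_def H.gfinprod_eq_finprod)
  finally show ?thesis .
qed

end

section \<open>The functor \<open>U_Cr\<close>\<close>

lemma chain_complexD:
  assumes "chain_complex A"
  shows "comm_group (cgr A n)" and "dif A n \<in> hom (cgr A (Suc n)) (cgr A n)"
    and "x \<in> carrier (cgr A (Suc (Suc n))) \<Longrightarrow> dif A n (dif A (Suc n) x) = \<one>\<^bsub>cgr A n\<^esub>"
  using assms by (auto simp: chain_complex_def)

lemma U_Cr_simps:
  "obj (U_Cr A) = carrier (cgr A 0)"
  "arr (U_Cr A) = carrier (cgr A 0) \<times> carrier (cgr A 1)"
  "src (U_Cr A) = fst"
  "tgt (U_Cr A) (a, l) = a \<otimes>\<^bsub>cgr A 0\<^esub> dif A 0 l"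
  "comp (U_Cr A) (b, m) (a, l) = (a, l \<otimes>\<^bsub>cgr A 1\<^esub> m)"
  "ident (U_Cr A) a = (a, \<one>\<^bsub>cgr A 1\<^esub>)"
  "cgrp (U_Cr A) n c = cgr A n"
  "act (U_Cr A) n p x = x"
  "bd1 (U_Cr A) c x = (c, dif A 1 x)"
  "bd (U_Cr A) n c = dif A n"
  by (simp_all add: U_Cr_def)

lemma groupoid_U_Cr:
  assumes A: "chain_complex A" shows "groupoid (U_Cr A)"
proof -
  interpret A0: comm_group "cgr A 0" by (rule chain_complexD(1)[OF A])
  interpret A1: comm_group "cgr A (Suc 0)" by (rule chain_complexD(1)[OF A])
  interpret d0: group_hom "cgr A (Suc 0)" "cgr A 0" "dif A 0"
    using chain_complexD(2)[OF A, of 0] A0.is_group A1.is_group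
    by (simp add: group_hom_def group_hom_axioms_def)
  show ?thesis
    unfolding groupoid_def
  proof (intro conjI ballI)
    fix f assume "f \<in> arr (U_Cr A)"
    then obtain a l where "f = (a, l)" "a \<in> carrier (cgr A 0)" "l \<in> carrier (cgr A 1)"
      by (auto simp: U_Cr_simps)
    then show "\<exists>g\<in>arr (U_Cr A). src (U_Cr A) g = tgt (U_Cr A) f \<and> tgt (U_Cr A) g = src (U_Cr A) f \<and>
        comp (U_Cr A) g f = ident (U_Cr A) (src (U_Cr A) f) \<and> comp (U_Cr A) f g = ident (U_Cr A) (tgt (U_Cr A) f)"
      by (intro bexI[of _ "(a \<otimes>\<^bsub>cgr A 0\<^esub> dif A 0 l, inv\<^bsub>cgr A 1\<^esub> l)"])
         (auto simp: U_Cr_simps A0.m_assoc)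
  qed (auto simp: U_Cr_simps d0.hom_mult A0.m_assoc A1.m_assoc)
qed

lemma crossed_complex_U_Cr:
  assumes A: "chain_complex A" shows "crossed_complex (U_Cr A)"
proof -
  interpret A0: comm_group "cgr A 0" by (rule chain_complexD(1)[OF A])
  interpret A1: comm_group "cgr A (Suc 0)" by (rule chain_complexD(1)[OF A])
  interpret A2: comm_group "cgr A 2" by (rule chain_complexD(1)[OF A])
  interpret d1: group_hom "cgr A 2" "cgr A (Suc 0)" "dif A (Suc 0)"
    using chain_complexD(2)[OF A, of 1] A1.is_group A2.is_group
    by (simp add: group_hom_def group_hom_axioms_def numeral_2_eq_2)
  have dd: "dif A 0 (dif A (Suc 0) x) = \<one>\<^bsub>cgr A 0\<^esub>" if "x \<in> carrier (cgr A 2)" for x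
    using chain_complexD(3)[OF A, of x 0] that by (simp add: numeral_2_eq_2)
  show ?thesis
    unfolding crossed_complex_def
  proof (intro conjI allI ballI impI groupoid_U_Cr[OF A])
    fix c a b assume "c \<in> obj (U_Cr A)" "a \<in> carrier (cgrp (U_Cr A) 2 c)" "b \<in> carrier (cgrp (U_Cr A) 2 c)"
    then show "act (U_Cr A) 2 (bd1 (U_Cr A) c a) b =
        a \<otimes>\<^bsub>cgrp (U_Cr A) 2 c\<^esub> b \<otimes>\<^bsub>cgrp (U_Cr A) 2 c\<^esub> inv\<^bsub>cgrp (U_Cr A) 2 c\<^esub> a"
      by (simp add: U_Cr_simps A2.m_comm[of a b] A2.m_assoc)
  next
    fix c x y assume "c \<in> obj (U_Cr A)" "x \<in> carrier (cgrp (U_Cr A) 2 c)" "y \<in> carrier (cgrp (U_Cr A) 2 c)"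
    then show "bd1 (U_Cr A) c (x \<otimes>\<^bsub>cgrp (U_Cr A) 2 c\<^esub> y) = comp (U_Cr A) (bd1 (U_Cr A) c x) (bd1 (U_Cr A) c y)"
      by (simp add: U_Cr_simps d1.hom_mult A1.m_comm)
  next
    fix c x assume "c \<in> obj (U_Cr A)" "x \<in> carrier (cgrp (U_Cr A) 3 c)"
    then show "bd1 (U_Cr A) c (bd (U_Cr A) 2 c x) = ident (U_Cr A) c"
      using chain_complexD(3)[OF A, of x 1] by (simp add: U_Cr_simps numeral_3_eq_3 numeral_2_eq_2)
  qed (use chain_complexD[OF A] in \<open>auto simp: U_Cr_simps hom_def comm_group.axioms(2) dd A1.m_comm\<close>)
qed

lemma cr_morphism_U_mor:
  assumes A: "chain_complex A" and B: "chain_complex B" and g: "chain_map A B g"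
  shows "cr_morphism (U_Cr A) (U_Cr B) (U_mor g)"
proof -
  have g_hom: "\<And>n. g n \<in> hom (cgr A n) (cgr B n)"
    and g_dif: "\<And>n x. x \<in> carrier (cgr A (Suc n)) \<Longrightarrow> g n (dif A n x) = dif B n (g (Suc n) x)"
    using g by (auto simp: chain_map_def)
  have g_one: "g n \<one>\<^bsub>cgr A n\<^esub> = \<one>\<^bsub>cgr B n\<^esub>" for n
    using hom_one[OF g_hom] chain_complexD(1)[OF A] chain_complexD(1)[OF B] by (simp add: comm_group.axioms(2))
  have U_mor_simps: "mo (U_mor g) = g 0" "mm (U_mor g) (a, l) = (g 0 a, g 1 l)" "me (U_mor g) n c = g n" for a l n c
    by (simp_all add: U_mor_def)
  show ?thesis
    unfolding cr_morphism_def
    by (auto simp: U_Cr_simps U_mor_simps g_hom g_one hom_in_carrier[OF g_hom] hom_mult[OF g_hom]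
                   hom_in_carrier[OF chain_complexD(2)[OF A]] numeral_2_eq_2 g_dif[symmetric])
qed

section \<open>The functor \<open>Ab_Cr\<close>\<close>

lemma Z0_simps [simp]:
  "carrier (Z0 C) = {z. Poly_Mapping.keys z \<subseteq> obj C}" "x \<otimes>\<^bsub>Z0 C\<^esub> y = x + y" "\<one>\<^bsub>Z0 C\<^esub> = 0"
  "Poly_Mapping.keys x \<subseteq> obj C \<Longrightarrow> inv\<^bsub>Z0 C\<^esub> x = - x"
  by (auto simp: Z0_def)

lemma Z1_simps [simp]:
  "carrier (Z1 C) = {z. Poly_Mapping.keys z \<subseteq> arr C}" "x \<otimes>\<^bsub>Z1 C\<^esub> y = x + y" "\<one>\<^bsub>Z1 C\<^esub> = 0"
  "Poly_Mapping.keys x \<subseteq> arr C \<Longrightarrow> inv\<^bsub>Z1 C\<^esub> x = - x"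
  by (auto simp: Z1_def)

lemma Z0_comm_group: "comm_group (Z0 C)" and Z1_comm_group: "comm_group (Z1 C)"
  and Z0_group: "group (Z0 C)" and Z1_group: "group (Z1 C)"
  by (simp_all add: Z0_def Z1_def abelian_free_Abelian_group)

lemma Z0_hom_eqI:
  "group H \<Longrightarrow> f \<in> hom (Z0 C) H \<Longrightarrow> g \<in> hom (Z0 C) H \<Longrightarrow>
   (\<And>c. c \<in> obj C \<Longrightarrow> f (frag_of c) = g (frag_of c)) \<Longrightarrow> z \<in> carrier (Z0 C) \<Longrightarrow> f z = g z"
  unfolding Z0_def by (rule free_Abelian_group_hom_eqI)

lemma Z1_hom_eqI:
  "group H \<Longrightarrow> f \<in> hom (Z1 C) H \<Longrightarrow> g \<in> hom (Z1 C) H \<Longrightarrow>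
   (\<And>l. l \<in> arr C \<Longrightarrow> f (frag_of l) = g (frag_of l)) \<Longrightarrow> z \<in> carrier (Z1 C) \<Longrightarrow> f z = g z"
  unfolding Z1_def by (rule free_Abelian_group_hom_eqI)

lemma inj_Inr_Inl: "inj (Inr \<circ> Inl)" and inj_Inr_Inr: "inj (Inr \<circ> Inr)"
  by (simp_all add: inj_def)

lemma degree_cases:
  fixes n :: nat
  obtains "n = 0" | "n = Suc 0" | "2 \<le> n"
  by linarith

locale cr_complex =
  fixes C :: "('o, 'm, 'e) crossed_cx"
  assumes crossed: "crossed_complex C"
begin

lemma src_obj: "l \<in> arr C \<Longrightarrow> src C l \<in> obj C"
  and tgt_obj: "l \<in> arr C \<Longrightarrow> tgt C l \<in> obj C"
  and ident_arr: "c \<in> obj C \<Longrightarrow> ident C c \<in> arr C"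
  and src_ident: "c \<in> obj C \<Longrightarrow> src C (ident C c) = c"
  and tgt_ident: "c \<in> obj C \<Longrightarrow> tgt C (ident C c) = c"
  and comp_ident: "f \<in> arr C \<Longrightarrow> comp C (ident C (tgt C f)) f = f"
  using crossed by (auto simp: crossed_complex_def groupoid_def)

lemma
  assumes "f \<in> arr C" "g \<in> arr C" "tgt C f = src C g"
  shows comp_arr: "comp C g f \<in> arr C"
    and src_comp: "src C (comp C g f) = src C f"
    and tgt_comp: "tgt C (comp C g f) = tgt C g"
  using crossed assms by (auto simp: crossed_complex_def groupoid_def)

lemma cgrp_group: "2 \<le> n \<Longrightarrow> c \<in> obj C \<Longrightarrow> group (cgrp C n c)"
  and cgrp_comm_group: "2 < n \<Longrightarrow> c \<in> obj C \<Longrightarrow> comm_group (cgrp C n c)"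
  and act_hom: "2 \<le> n \<Longrightarrow> l \<in> arr C \<Longrightarrow> act C n l \<in> hom (cgrp C n (src C l)) (cgrp C n (tgt C l))"
  and bd_hom: "2 \<le> n \<Longrightarrow> c \<in> obj C \<Longrightarrow> bd C n c \<in> hom (cgrp C (Suc n) c) (cgrp C n c)"
  and bd_act: "2 \<le> n \<Longrightarrow> l \<in> arr C \<Longrightarrow> x \<in> carrier (cgrp C (Suc n) (src C l)) \<Longrightarrow>
    bd C n (tgt C l) (act C (Suc n) l x) = act C n l (bd C n (src C l) x)"
  and bd_bd: "2 \<le> n \<Longrightarrow> c \<in> obj C \<Longrightarrow> x \<in> carrier (cgrp C (Suc (Suc n)) c) \<Longrightarrow>
    bd C n c (bd C (Suc n) c x) = \<one>\<^bsub>cgrp C n c\<^esub>"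
  using crossed by (simp_all add: crossed_complex_def)

lemma
  assumes "c \<in> obj C" "x \<in> carrier (cgrp C 2 c)"
  shows bd1_arr: "bd1 C c x \<in> arr C"
    and src_bd1: "src C (bd1 C c x) = c"
    and tgt_bd1: "tgt C (bd1 C c x) = c"
    and bd1_mult: "y \<in> carrier (cgrp C 2 c) \<Longrightarrow> bd1 C c (x \<otimes>\<^bsub>cgrp C 2 c\<^esub> y) = comp C (bd1 C c x) (bd1 C c y)"
    and act_bd1: "y \<in> carrier (cgrp C 2 c) \<Longrightarrow>
      act C 2 (bd1 C c x) y = x \<otimes>\<^bsub>cgrp C 2 c\<^esub> y \<otimes>\<^bsub>cgrp C 2 c\<^esub> inv\<^bsub>cgrp C 2 c\<^esub> x"
  using crossed assms by (simp_all add: crossed_complex_def)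

lemma bd1_bd: "c \<in> obj C \<Longrightarrow> x \<in> carrier (cgrp C 3 c) \<Longrightarrow> bd1 C c (bd C 2 c x) = ident C c"
  using crossed by (simp add: crossed_complex_def)

lemma bd1_act: "l \<in> arr C \<Longrightarrow> x \<in> carrier (cgrp C 2 (src C l)) \<Longrightarrow>
    comp C (bd1 C (tgt C l) (act C 2 l x)) l = comp C l (bd1 C (src C l) x)"
  using crossed by (simp add: crossed_complex_def)

lemma act_carrier:
  "2 \<le> n \<Longrightarrow> l \<in> arr C \<Longrightarrow> x \<in> carrier (cgrp C n (src C l)) \<Longrightarrow> act C n l x \<in> carrier (cgrp C n (tgt C l))"
  using act_hom by (rule hom_in_carrier)

lemma bd_carrier:
  "2 \<le> n \<Longrightarrow> c \<in> obj C \<Longrightarrow> x \<in> carrier (cgrp C (Suc n) c) \<Longrightarrow> bd C n c x \<in> carrier (cgrp C n c)"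
  using bd_hom by (rule hom_in_carrier)

lemma bd_one: "2 \<le> n \<Longrightarrow> c \<in> obj C \<Longrightarrow> bd C n c \<one>\<^bsub>cgrp C (Suc n) c\<^esub> = \<one>\<^bsub>cgrp C n c\<^esub>"
  by (rule hom_one[OF bd_hom]) (simp_all add: cgrp_group)

abbreviation \<pi>1 :: "('m \<Rightarrow>\<^sub>0 int) \<Rightarrow> ('m \<Rightarrow>\<^sub>0 int) set" where
  "\<pi>1 z \<equiv> N1 C #>\<^bsub>Z1 C\<^esub> z"

lemma frag_comp_in_N1:
  "f \<in> arr C \<Longrightarrow> g \<in> arr C \<Longrightarrow> tgt C f = src C g \<Longrightarrow> frag_of (comp C g f) - frag_of g - frag_of f \<in> N1 C"
  unfolding N1_def by (rule generate.incl) blast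

lemma N1_generators_carrier:
  "{frag_of (comp C g f) - frag_of g - frag_of f |f g. f \<in> arr C \<and> g \<in> arr C \<and> tgt C f = src C g}
    \<subseteq> carrier (Z1 C)"
proof clarify
  fix f g assume "f \<in> arr C" "g \<in> arr C" "tgt C f = src C g"
  then show "frag_of (comp C g f) - frag_of g - frag_of f \<in> carrier (Z1 C)"
    by (simp add: comp_arr keys_diff_subset)
qed

lemma N1_subgroup: "subgroup (N1 C) (Z1 C)"
  unfolding N1_def by (rule group.generate_is_subgroup[OF _ N1_generators_carrier]) (simp add: Z1_def)

lemma N1_normal: "N1 C \<lhd> Z1 C"
  using comm_group.subgroup_imp_normal[OF Z1_comm_group N1_subgroup] .

lemma Q1_comm_group: "comm_group (Q1 C)"
  unfolding Q1_def using comm_group.abelian_FactGroup[OF Z1_comm_group N1_subgroup] .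

lemma Q1_group: "group (Q1 C)"
  using Q1_comm_group by (rule comm_group.axioms(2))

lemma \<pi>1_hom: "\<pi>1 \<in> hom (Z1 C) (Q1 C)"
  unfolding Q1_def by (rule normal.r_coset_hom_Mod[OF N1_normal])

lemma \<pi>1_N1: "z \<in> N1 C \<Longrightarrow> \<pi>1 z = \<one>\<^bsub>Q1 C\<^esub>"
  using subgroup.rcos_const[OF N1_subgroup Z1_group] by (simp add: Q1_def)

lemma \<pi>1_comp:
  assumes f: "f \<in> arr C" and g: "g \<in> arr C" and fg: "tgt C f = src C g"
  shows "\<pi>1 (frag_of (comp C g f)) = \<pi>1 (frag_of f) \<otimes>\<^bsub>Q1 C\<^esub> \<pi>1 (frag_of g)"
proof -
  have sum: "frag_of f + frag_of g \<in> carrier (Z1 C)"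
    using f g by (auto dest: subsetD[OF keys_add])
  have "frag_of (comp C g f) + (- frag_of f - frag_of g) \<in> N1 C"
    using frag_comp_in_N1[OF assms] by (simp add: algebra_simps)
  then have "\<pi>1 (frag_of (comp C g f)) = \<pi>1 (frag_of f + frag_of g)"
    using comp_arr[OF assms] sum by (intro rcos_eqI[OF _ N1_subgroup]) (simp_all add: Z1_def)
  then show ?thesis
    using hom_mult[OF \<pi>1_hom] f g by simp
qed

lemma \<pi>1_ident: "c \<in> obj C \<Longrightarrow> \<pi>1 (frag_of (ident C c)) = \<one>\<^bsub>Q1 C\<^esub>"
  using \<pi>1_comp[of "ident C c" "ident C c"] comp_ident[of "ident C c"]
    ident_arr src_ident tgt_ident \<pi>1_hom Q1_group
  by (simp add: hom_in_carrier group.l_cancel_one')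

lemma hom_trivial_on_N1:
  assumes H: "comm_group H" and \<phi>: "\<phi> \<in> hom (Z1 C) H"
    and \<phi>_comp: "\<And>f g. f \<in> arr C \<Longrightarrow> g \<in> arr C \<Longrightarrow> tgt C f = src C g \<Longrightarrow>
       \<phi> (frag_of (comp C g f)) = \<phi> (frag_of f) \<otimes>\<^bsub>H\<^esub> \<phi> (frag_of g)"
    and z: "z \<in> N1 C"
  shows "\<phi> z = \<one>\<^bsub>H\<^esub>"
proof (rule hom_trivial_on_generate[OF comm_group.axioms(2)[OF Z1_comm_group] comm_group.axioms(2)[OF H]
             \<phi> N1_generators_carrier _ z[unfolded N1_def]])
  interpret H: comm_group H by (rule H)
  fix s assume "s \<in> {frag_of (comp C g f) - frag_of g - frag_of f |f g. f \<in> arr C \<and> g \<in> arr C \<and> tgt C f = src C g}"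
  then obtain f g where fg: "f \<in> arr C" "g \<in> arr C" "tgt C f = src C g"
    and s: "s = frag_of (comp C g f) - frag_of g - frag_of f" by blast
  have "\<phi> s = \<phi> (frag_of (comp C g f)) \<otimes>\<^bsub>H\<^esub> inv\<^bsub>H\<^esub> \<phi> (frag_of g) \<otimes>\<^bsub>H\<^esub> inv\<^bsub>H\<^esub> \<phi> (frag_of f)"
    unfolding s using fg comp_arr[OF fg]
    by (simp add: hom_free_Abelian_group_diff[OF \<phi>[unfolded Z1_def] H.is_group] keys_diff_subset)
  also have "\<dots> = \<phi> (frag_of f) \<otimes>\<^bsub>H\<^esub> \<phi> (frag_of g) \<otimes>\<^bsub>H\<^esub> inv\<^bsub>H\<^esub> \<phi> (frag_of g) \<otimes>\<^bsub>H\<^esub> inv\<^bsub>H\<^esub> \<phi> (frag_of f)"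
    using \<phi>_comp[OF fg] by simp
  also have "\<dots> = \<one>\<^bsub>H\<^esub>"
    using fg hom_in_carrier[OF \<phi>] by (simp add: H.m_assoc H.m_comm[of "\<phi> (frag_of g)"])
  finally show "\<phi> s = \<one>\<^bsub>H\<^esub>" .
qed

lemma ab_d0_frag_of: "ab_d0 C (frag_of l) = frag_of (tgt C l) - frag_of (src C l)"
  by (simp add: ab_d0_def)

lemma ab_d0_hom: "ab_d0 C \<in> hom (Z1 C) (Z0 C)"
proof (rule homI)
  fix z assume z: "z \<in> carrier (Z1 C)"
  have "Poly_Mapping.keys (frag_of (tgt C l) - frag_of (src C l)) \<subseteq> obj C"
    if "l \<in> Poly_Mapping.keys z" for l
  proof -
    have "l \<in> arr C" using that z by auto
    then show ?thesis by (simp add: keys_diff_subset src_obj tgt_obj)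
  qed
  moreover have "Poly_Mapping.keys (ab_d0 C z)
      \<subseteq> (\<Union>l\<in>Poly_Mapping.keys z. Poly_Mapping.keys (frag_of (tgt C l) - frag_of (src C l)))"
    unfolding ab_d0_def by (rule keys_frag_extend)
  ultimately show "ab_d0 C z \<in> carrier (Z0 C)" by fastforce
qed (simp add: ab_d0_def frag_extend_add)

lemma ab_d0_N1: "z \<in> N1 C \<Longrightarrow> ab_d0 C z = \<one>\<^bsub>Z0 C\<^esub>"
  by (rule hom_trivial_on_N1[OF _ ab_d0_hom])
     (simp_all add: Z0_comm_group ab_d0_frag_of src_comp tgt_comp)

abbreviation \<pi>n :: "nat \<Rightarrow> ('o \<Rightarrow> 'e) \<Rightarrow> ('o \<Rightarrow> 'e) set" where
  "\<pi>n n x \<equiv> Nn n C #>\<^bsub>Sn n C\<^esub> x"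

lemma Sn_group: "2 \<le> n \<Longrightarrow> group (Sn n C)"
  unfolding Sn_def by (rule sum_group) (simp add: cgrp_group)

lemma Sn_carrier: "2 \<le> n \<Longrightarrow> carrier (Sn n C) =
    {x \<in> \<Pi>\<^sub>E p\<in>obj C. carrier (cgrp C n p). finite {p \<in> obj C. x p \<noteq> \<one>\<^bsub>cgrp C n p\<^esub>}}"
  unfolding Sn_def by (rule carrier_sum_group) (simp add: cgrp_group)

lemma Sn_elem: "2 \<le> n \<Longrightarrow> x \<in> carrier (Sn n C) \<Longrightarrow> p \<in> obj C \<Longrightarrow> x p \<in> carrier (cgrp C n p)"
  by (auto simp: Sn_carrier)

lemma inj_c_eq_sum_group_inj: "inj_c n C = sum_group_inj (obj C) (cgrp C n)"
  by (simp add: fun_eq_iff inj_c_def sum_group_inj_def)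

lemma inj_c_hom: "2 \<le> n \<Longrightarrow> c \<in> obj C \<Longrightarrow> inj_c n C c \<in> hom (cgrp C n c) (Sn n C)"
  unfolding inj_c_eq_sum_group_inj Sn_def by (rule sum_group_inj_hom) (simp_all add: cgrp_group)

lemma inj_c_carrier:
  "2 \<le> n \<Longrightarrow> c \<in> obj C \<Longrightarrow> a \<in> carrier (cgrp C n c) \<Longrightarrow> inj_c n C c a \<in> carrier (Sn n C)"
  using inj_c_hom by (rule hom_in_carrier)

lemma Sn_hom_eqI:
  assumes "2 \<le> n" "group H" "f \<in> hom (Sn n C) H" "g \<in> hom (Sn n C) H"
    and "\<And>c a. c \<in> obj C \<Longrightarrow> a \<in> carrier (cgrp C n c) \<Longrightarrow> f (inj_c n C c a) = g (inj_c n C c a)"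
    and "x \<in> carrier (Sn n C)"
  shows "f x = g x"
  by (rule sum_group_hom_eqI[of "obj C" "cgrp C n" H f g x, folded Sn_def inj_c_eq_sum_group_inj])
     (use assms in \<open>simp_all add: cgrp_group\<close>)

lemma Nn_generators_carrier:
  assumes n: "2 \<le> n"
  shows "{inj_c n C (tgt C l) (act C n l x) \<otimes>\<^bsub>Sn n C\<^esub> inv\<^bsub>Sn n C\<^esub> (inj_c n C (src C l) x) | l x.
        l \<in> arr C \<and> x \<in> carrier (cgrp C n (src C l))} \<subseteq> carrier (Sn n C)"
proof clarify
  interpret S: group "Sn n C" by (rule Sn_group[OF n])
  fix l x assume "l \<in> arr C" "x \<in> carrier (cgrp C n (src C l))"
  then show "inj_c n C (tgt C l) (act C n l x) \<otimes>\<^bsub>Sn n C\<^esub> inv\<^bsub>Sn n C\<^esub> (inj_c n C (src C l) x) \<in> carrier (Sn n C)"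
    using n by (simp add: inj_c_carrier act_carrier src_obj tgt_obj)
qed

lemma Nn_subgroup: "2 \<le> n \<Longrightarrow> subgroup (Nn n C) (Sn n C)"
  unfolding Nn_def by (rule group.generate_is_subgroup[OF Sn_group Nn_generators_carrier])

lemma act_generator_in_Nn: "l \<in> arr C \<Longrightarrow> x \<in> carrier (cgrp C n (src C l)) \<Longrightarrow>
   inj_c n C (tgt C l) (act C n l x) \<otimes>\<^bsub>Sn n C\<^esub> inv\<^bsub>Sn n C\<^esub> (inj_c n C (src C l) x) \<in> Nn n C"
  unfolding Nn_def by (rule generate.incl) blast

text \<open>In degree two the commutator of \<open>a\<close> and \<open>b\<close> is \<open>act (bd1 a) b \<cdot> b\<inverse>\<close>, a generator of
  \<open>Nn 2 C\<close>; in higher degrees the groups are abelian.\<close>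

lemma inj_c_commutator_in_Nn:
  assumes n: "2 \<le> n" and p: "p \<in> obj C" and a: "a \<in> carrier (cgrp C n p)" and b: "b \<in> carrier (cgrp C n p)"
  shows "inj_c n C p (a \<otimes>\<^bsub>cgrp C n p\<^esub> b \<otimes>\<^bsub>cgrp C n p\<^esub> inv\<^bsub>cgrp C n p\<^esub> a \<otimes>\<^bsub>cgrp C n p\<^esub> inv\<^bsub>cgrp C n p\<^esub> b)
    \<in> Nn n C"
proof (cases "n = 2")
  case True
  interpret S: group "Sn n C" by (rule Sn_group[OF n])
  interpret G: group "cgrp C n p" by (rule cgrp_group[OF n p])
  have l: "bd1 C p a \<in> arr C" "src C (bd1 C p a) = p" "tgt C (bd1 C p a) = p"
    using bd1_arr src_bd1 tgt_bd1 p a True by auto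
  have conj: "act C n (bd1 C p a) b = a \<otimes>\<^bsub>cgrp C n p\<^esub> b \<otimes>\<^bsub>cgrp C n p\<^esub> inv\<^bsub>cgrp C n p\<^esub> a"
    using act_bd1[OF p] a b True by simp
  have "inj_c n C p (a \<otimes>\<^bsub>cgrp C n p\<^esub> b \<otimes>\<^bsub>cgrp C n p\<^esub> inv\<^bsub>cgrp C n p\<^esub> a \<otimes>\<^bsub>cgrp C n p\<^esub> inv\<^bsub>cgrp C n p\<^esub> b) =
      inj_c n C p (act C n (bd1 C p a) b) \<otimes>\<^bsub>Sn n C\<^esub> inv\<^bsub>Sn n C\<^esub> (inj_c n C p b)"
    using a b hom_inv_eq[OF inj_c_hom[OF n p] G.is_group S.is_group b]
    by (simp add: conj hom_mult[OF inj_c_hom[OF n p]] del: mult_sum_group)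
  also have "\<dots> \<in> Nn n C"
    using act_generator_in_Nn[OF l(1)] l b by simp
  finally show ?thesis .
next
  case False
  interpret G: comm_group "cgrp C n p" using False n cgrp_comm_group[OF _ p] by simp
  have "a \<otimes>\<^bsub>cgrp C n p\<^esub> b \<otimes>\<^bsub>cgrp C n p\<^esub> inv\<^bsub>cgrp C n p\<^esub> a \<otimes>\<^bsub>cgrp C n p\<^esub> inv\<^bsub>cgrp C n p\<^esub> b = \<one>\<^bsub>cgrp C n p\<^esub>"
    using a b by (simp add: G.m_comm[of a b] G.m_assoc)
  then show ?thesis
    using hom_one[OF inj_c_hom[OF n p] G.is_group Sn_group[OF n]] subgroup.one_closed[OF Nn_subgroup[OF n]]
    by simp
qed

lemma commutator_in_Nn:
  assumes n: "2 \<le> n" and x: "x \<in> carrier (Sn n C)" and y: "y \<in> carrier (Sn n C)"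
  shows "x \<otimes>\<^bsub>Sn n C\<^esub> y \<otimes>\<^bsub>Sn n C\<^esub> inv\<^bsub>Sn n C\<^esub> x \<otimes>\<^bsub>Sn n C\<^esub> inv\<^bsub>Sn n C\<^esub> y \<in> Nn n C"
    (is "?z \<in> _")
proof -
  interpret S: group "Sn n C" by (rule Sn_group[OF n])
  have "?z \<in> carrier (Sn n C)" using x y by simp
  moreover have "sum_group_inj (obj C) (cgrp C n) p (?z p) \<in> Nn n C" if p: "p \<in> obj C" for p
  proof -
    have "?z p = x p \<otimes>\<^bsub>cgrp C n p\<^esub> y p \<otimes>\<^bsub>cgrp C n p\<^esub> inv\<^bsub>cgrp C n p\<^esub> x p \<otimes>\<^bsub>cgrp C n p\<^esub> inv\<^bsub>cgrp C n p\<^esub> y p"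
      using p x y by (simp add: Sn_def inv_sum_group cgrp_group n)
    then show ?thesis
      using inj_c_commutator_in_Nn[OF n p Sn_elem[OF n x p] Sn_elem[OF n y p]]
      by (simp add: inj_c_eq_sum_group_inj)
  qed
  ultimately show ?thesis
    using sum_group_in_subgroup[of "obj C" "cgrp C n" "Nn n C" ?z] Nn_subgroup[OF n] n
    by (simp add: Sn_def cgrp_group del: mult_sum_group)
qed

lemma Nn_normal: "2 \<le> n \<Longrightarrow> Nn n C \<lhd> Sn n C"
  by (rule normal_if_contains_commutators[OF Sn_group Nn_subgroup commutator_in_Nn])

lemma Qn_comm_group: "2 \<le> n \<Longrightarrow> comm_group (Qn n C)"
  unfolding Qn_def by (rule comm_group_FactGroup_if_contains_commutators[OF Sn_group Nn_subgroup commutator_in_Nn])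

lemma Qn_group: "2 \<le> n \<Longrightarrow> group (Qn n C)"
  using Qn_comm_group by (rule comm_group.axioms(2))

lemma \<pi>n_hom: "2 \<le> n \<Longrightarrow> \<pi>n n \<in> hom (Sn n C) (Qn n C)"
  unfolding Qn_def by (rule normal.r_coset_hom_Mod[OF Nn_normal])

lemma \<pi>n_act:
  "2 \<le> n \<Longrightarrow> l \<in> arr C \<Longrightarrow> x \<in> carrier (cgrp C n (src C l)) \<Longrightarrow>
   \<pi>n n (inj_c n C (tgt C l) (act C n l x)) = \<pi>n n (inj_c n C (src C l) x)"
  by (rule rcos_eqI[OF Sn_group Nn_subgroup])
     (simp_all add: act_generator_in_Nn inj_c_carrier act_carrier src_obj tgt_obj)

lemma hom_trivial_on_Nn:
  assumes n: "2 \<le> n" and H: "group H" and \<phi>: "\<phi> \<in> hom (Sn n C) H"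
    and \<phi>_act: "\<And>l x. l \<in> arr C \<Longrightarrow> x \<in> carrier (cgrp C n (src C l)) \<Longrightarrow>
       \<phi> (inj_c n C (tgt C l) (act C n l x)) = \<phi> (inj_c n C (src C l) x)"
    and x: "x \<in> Nn n C"
  shows "\<phi> x = \<one>\<^bsub>H\<^esub>"
proof (rule hom_trivial_on_generate[OF Sn_group[OF n] H \<phi> Nn_generators_carrier[OF n] _ x[unfolded Nn_def]])
  interpret S: group "Sn n C" by (rule Sn_group[OF n])
  interpret H: group H by (rule H)
  fix s assume "s \<in> {inj_c n C (tgt C l) (act C n l x) \<otimes>\<^bsub>Sn n C\<^esub> inv\<^bsub>Sn n C\<^esub> (inj_c n C (src C l) x) | l x.
        l \<in> arr C \<and> x \<in> carrier (cgrp C n (src C l))}"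
  then obtain l b where lb: "l \<in> arr C" "b \<in> carrier (cgrp C n (src C l))"
    and s: "s = inj_c n C (tgt C l) (act C n l b) \<otimes>\<^bsub>Sn n C\<^esub> inv\<^bsub>Sn n C\<^esub> (inj_c n C (src C l) b)"
    by blast
  have "inj_c n C (tgt C l) (act C n l b) \<in> carrier (Sn n C)" "inj_c n C (src C l) b \<in> carrier (Sn n C)"
    using lb n by (simp_all add: inj_c_carrier act_carrier src_obj tgt_obj)
  then show "\<phi> s = \<one>\<^bsub>H\<^esub>"
    using \<phi>_act[OF lb] hom_in_carrier[OF \<phi>]
    by (simp add: s hom_mult[OF \<phi>] hom_inv_eq[OF \<phi> S.is_group H.is_group] del: mult_sum_group)
qed

abbreviation bd1_class :: "'o \<Rightarrow> 'e \<Rightarrow> ('m \<Rightarrow>\<^sub>0 int) set" where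
  "bd1_class c a \<equiv> \<pi>1 (frag_of (bd1 C c a))"

lemma bd1_class_carrier: "c \<in> obj C \<Longrightarrow> a \<in> carrier (cgrp C 2 c) \<Longrightarrow> bd1_class c a \<in> carrier (Q1 C)"
  using hom_in_carrier[OF \<pi>1_hom] bd1_arr by simp

lemma bd1_class_hom: "c \<in> obj C \<Longrightarrow> bd1_class c \<in> hom (cgrp C 2 c) (Q1 C)"
proof (rule homI)
  interpret Q: comm_group "Q1 C" by (rule Q1_comm_group)
  fix a b assume c: "c \<in> obj C" and a: "a \<in> carrier (cgrp C 2 c)" and b: "b \<in> carrier (cgrp C 2 c)"
  show "bd1_class c (a \<otimes>\<^bsub>cgrp C 2 c\<^esub> b) = bd1_class c a \<otimes>\<^bsub>Q1 C\<^esub> bd1_class c b"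
    using \<pi>1_comp[of "bd1 C c b" "bd1 C c a"] bd1_class_carrier[OF c] a b c
    by (simp add: bd1_mult bd1_arr src_bd1 tgt_bd1 Q.m_comm)
qed (rule bd1_class_carrier)

text \<open>The compatibility of \<open>bd1\<close> with the action becomes invariance once \<open>Q1 C\<close> is abelian.\<close>

lemma bd1_class_act:
  assumes l: "l \<in> arr C" and b: "b \<in> carrier (cgrp C 2 (src C l))"
  shows "bd1_class (tgt C l) (act C 2 l b) = bd1_class (src C l) b"
proof -
  interpret Q: comm_group "Q1 C" by (rule Q1_comm_group)
  have ab: "act C 2 l b \<in> carrier (cgrp C 2 (tgt C l))" using act_carrier[OF _ l b] by simp
  have l_carrier: "\<pi>1 (frag_of l) \<in> carrier (Q1 C)" using hom_in_carrier[OF \<pi>1_hom] l by simp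
  have "\<pi>1 (frag_of l) \<otimes>\<^bsub>Q1 C\<^esub> bd1_class (tgt C l) (act C 2 l b)
      = \<pi>1 (frag_of (comp C (bd1 C (tgt C l) (act C 2 l b)) l))"
    using ab l by (simp add: \<pi>1_comp bd1_arr src_bd1 tgt_obj)
  also have "\<dots> = \<pi>1 (frag_of l) \<otimes>\<^bsub>Q1 C\<^esub> bd1_class (src C l) b"
    using b l l_carrier bd1_class_carrier[OF src_obj[OF l] b]
    by (simp add: bd1_act \<pi>1_comp bd1_arr tgt_bd1 src_obj Q.m_comm)
  finally show ?thesis
    using l_carrier bd1_class_carrier[OF src_obj[OF l] b] bd1_class_carrier[OF tgt_obj[OF l] ab] by simp
qed

lemma \<pi>1_sum:
  "finite S \<Longrightarrow> (\<And>p. p \<in> S \<Longrightarrow> F p \<in> carrier (Z1 C)) \<Longrightarrow> \<pi>1 (sum F S) = finprod (Q1 C) (\<lambda>p. \<pi>1 (F p)) S"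
proof (induction S rule: finite_induct)
  case empty
  interpret Q: comm_group "Q1 C" by (rule Q1_comm_group)
  show ?case using \<pi>1_N1 subgroup.one_closed[OF N1_subgroup] by simp
next
  case (insert a S)
  interpret Q: comm_group "Q1 C" by (rule Q1_comm_group)
  have "sum F S \<in> carrier (Z1 C)"
    using insert.prems sum_closed_free_Abelian_group[of S F "arr C"] by simp
  then show ?case
    using insert hom_mult[OF \<pi>1_hom, of "F a" "sum F S"] hom_in_carrier[OF \<pi>1_hom]
    by (simp add: Pi_def)
qed

text \<open>\<open>ab_d1 C\<close> is not a homomorphism into \<open>Z1 C\<close>, since \<open>bd1\<close> is multiplicative only modulo
  \<open>N1 C\<close>; its composite with \<open>\<pi>1\<close> is, being the direct sum of the maps \<open>bd1_class c\<close>.\<close>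

lemma \<pi>1_ab_d1:
  assumes x: "x \<in> carrier (Sn 2 C)"
  shows "\<pi>1 (ab_d1 C x) = sum_group_lift (obj C) (Q1 C) bd1_class x"
proof -
  interpret Q: comm_group "Q1 C" by (rule Q1_comm_group)
  let ?S = "{p \<in> obj C. x p \<noteq> \<one>\<^bsub>cgrp C 2 p\<^esub>}"
  have fin: "finite ?S" using x by (simp add: Sn_carrier)
  have car: "(\<lambda>p. bd1_class p (x p)) \<in> obj C \<rightarrow> carrier (Q1 C)"
    using x by (auto simp: bd1_class_carrier Sn_elem)
  have one: "bd1_class p \<one>\<^bsub>cgrp C 2 p\<^esub> = \<one>\<^bsub>Q1 C\<^esub>" if "p \<in> obj C" for p
    using hom_one[OF bd1_class_hom[OF that] cgrp_group Q1_group] that by simp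
  have "\<pi>1 (ab_d1 C x) = finprod (Q1 C) (\<lambda>p. bd1_class p (x p)) ?S"
    unfolding ab_d1_def using fin x by (intro \<pi>1_sum) (auto simp: bd1_arr Sn_elem)
  also have "\<dots> = gfinprod (Q1 C) (\<lambda>p. bd1_class p (x p)) ?S"
    using fin car by (intro Q.gfinprod_eq_finprod[symmetric]) auto
  also have "\<dots> = sum_group_lift (obj C) (Q1 C) bd1_class x"
    unfolding sum_group_lift_def
    by (rule Q.gfinprod_mono_neutral_cong_left) (use car one in auto)
  finally show ?thesis .
qed

lemma \<pi>1_ab_d1_hom: "(\<lambda>x. \<pi>1 (ab_d1 C x)) \<in> hom (Sn 2 C) (Q1 C)"
proof (rule group.hom_restrict[OF Sn_group])
  show "sum_group_lift (obj C) (Q1 C) bd1_class \<in> hom (Sn 2 C) (Q1 C)"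
    unfolding Sn_def
    by (rule sum_group_lift_hom[OF _ Q1_comm_group]) (simp_all add: cgrp_group bd1_class_hom)
qed (simp_all add: \<pi>1_ab_d1)

lemma \<pi>1_ab_d1_inj_c:
  assumes c: "c \<in> obj C" and a: "a \<in> carrier (cgrp C 2 c)"
  shows "\<pi>1 (ab_d1 C (inj_c 2 C c a)) = bd1_class c a"
proof -
  have "\<pi>1 (ab_d1 C (inj_c 2 C c a)) = sum_group_lift (obj C) (Q1 C) bd1_class (inj_c 2 C c a)"
    using \<pi>1_ab_d1 inj_c_carrier c a by simp
  also have "\<dots> = bd1_class c a"
    using sum_group_lift_inj[OF _ Q1_comm_group, of "obj C" "cgrp C 2" bd1_class c a] c a
    by (simp add: inj_c_eq_sum_group_inj cgrp_group bd1_class_hom)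
  finally show ?thesis .
qed

lemma \<pi>1_ab_d1_Nn: "x \<in> Nn 2 C \<Longrightarrow> \<pi>1 (ab_d1 C x) = \<one>\<^bsub>Q1 C\<^esub>"
  by (rule hom_trivial_on_Nn[OF _ Q1_group \<pi>1_ab_d1_hom])
     (simp_all add: \<pi>1_ab_d1_inj_c bd1_class_act act_carrier src_obj tgt_obj)

lemma ab_dn_hom:
  assumes n: "2 \<le> n" shows "ab_dn n C \<in> hom (Sn (Suc n) C) (Sn n C)"
proof (rule homI)
  fix x assume x: "x \<in> carrier (Sn (Suc n) C)"
  have "{p \<in> obj C. ab_dn n C x p \<noteq> \<one>\<^bsub>cgrp C n p\<^esub>} \<subseteq> {p \<in> obj C. x p \<noteq> \<one>\<^bsub>cgrp C (Suc n) p\<^esub>}"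
    using bd_one[OF n] by (auto simp: ab_dn_def)
  moreover have "finite {p \<in> obj C. x p \<noteq> \<one>\<^bsub>cgrp C (Suc n) p\<^esub>}"
    using x n by (simp add: Sn_carrier)
  ultimately have "finite {p \<in> obj C. ab_dn n C x p \<noteq> \<one>\<^bsub>cgrp C n p\<^esub>}"
    by (rule finite_subset)
  moreover have "ab_dn n C x \<in> (\<Pi>\<^sub>E p\<in>obj C. carrier (cgrp C n p))"
    using x n bd_carrier[OF n] by (auto simp: ab_dn_def Sn_carrier)
  ultimately show "ab_dn n C x \<in> carrier (Sn n C)"
    using n by (simp add: Sn_carrier)
next
  fix x y assume "x \<in> carrier (Sn (Suc n) C)" "y \<in> carrier (Sn (Suc n) C)"
  then show "ab_dn n C (x \<otimes>\<^bsub>Sn (Suc n) C\<^esub> y) = ab_dn n C x \<otimes>\<^bsub>Sn n C\<^esub> ab_dn n C y"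
    using n by (auto simp: ab_dn_def Sn_def fun_eq_iff hom_mult[OF bd_hom] Sn_elem[unfolded Sn_def])
qed

lemma ab_dn_inj_c: "2 \<le> n \<Longrightarrow> c \<in> obj C \<Longrightarrow> ab_dn n C (inj_c (Suc n) C c a) = inj_c n C c (bd C n c a)"
  by (auto simp: ab_dn_def inj_c_def fun_eq_iff bd_one)

lemma \<pi>n_ab_dn_hom:
  assumes n: "2 \<le> n" shows "(\<lambda>x. \<pi>n n (ab_dn n C x)) \<in> hom (Sn (Suc n) C) (Qn n C)"
  using hom_compose[OF ab_dn_hom[OF n] \<pi>n_hom[OF n]] unfolding o_def .

lemma \<pi>n_ab_dn_Nn:
  assumes n: "2 \<le> n" and x: "x \<in> Nn (Suc n) C"
  shows "\<pi>n n (ab_dn n C x) = \<one>\<^bsub>Qn n C\<^esub>"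
proof (rule hom_trivial_on_Nn[OF _ Qn_group[OF n] \<pi>n_ab_dn_hom[OF n] _ x])
  fix l b assume l: "l \<in> arr C" and b: "b \<in> carrier (cgrp C (Suc n) (src C l))"
  then show "\<pi>n n (ab_dn n C (inj_c (Suc n) C (tgt C l) (act C (Suc n) l b))) =
             \<pi>n n (ab_dn n C (inj_c (Suc n) C (src C l) b))"
    using n by (simp add: ab_dn_inj_c src_obj tgt_obj bd_act \<pi>n_act bd_carrier)
qed (use n in simp)

lemma cgr_Ab_Cr:
  "cgr (Ab_Cr C) 0 = transport Inl (Z0 C)"
  "cgr (Ab_Cr C) (Suc 0) = transport (Inr \<circ> Inl) (Q1 C)"
  "2 \<le> n \<Longrightarrow> cgr (Ab_Cr C) n = transport (Inr \<circ> Inr) (Qn n C)"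
  by (simp_all add: Ab_Cr_def)

lemma carrier_Ab_Cr:
  "carrier (cgr (Ab_Cr C) 0) = Inl ` carrier (Z0 C)"
  "carrier (cgr (Ab_Cr C) (Suc 0)) = (\<lambda>z. Inr (Inl (\<pi>1 z))) ` carrier (Z1 C)"
  "2 \<le> n \<Longrightarrow> carrier (cgr (Ab_Cr C) n) = (\<lambda>x. Inr (Inr (\<pi>n n x))) ` carrier (Sn n C)"
  by (auto simp: cgr_Ab_Cr transport_carrier Q1_def Qn_def carrier_FactGroup image_comp)

lemma comm_group_Ab_Cr: "comm_group (cgr (Ab_Cr C) n)"
  by (cases n rule: degree_cases)
     (simp_all add: cgr_Ab_Cr comm_group_transport inj_Inr_Inl inj_Inr_Inr Z0_comm_group Q1_comm_group Qn_comm_group)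

lemma dif_Ab_Cr:
  "dif (Ab_Cr C) 0 (Inr (Inl Z)) = Inl (ab_d0 C (SOME z. z \<in> Z))"
  "dif (Ab_Cr C) (Suc 0) (Inr (Inr X)) = Inr (Inl (\<pi>1 (ab_d1 C (SOME x. x \<in> X))))"
  "2 \<le> n \<Longrightarrow> dif (Ab_Cr C) n (Inr (Inr X)) = Inr (Inr (\<pi>n n (ab_dn n C (SOME x. x \<in> X))))"
  by (simp_all add: Ab_Cr_def un1_def unn_def)

lemma dif_Ab_Cr_hom: "dif (Ab_Cr C) n \<in> hom (cgr (Ab_Cr C) (Suc n)) (cgr (Ab_Cr C) n)"
proof (cases n rule: degree_cases)
  case 1
  show ?thesis unfolding 1 cgr_Ab_Cr
  proof (rule hom_transport_transport[OF inj_Inr_Inl inj_Inl Q1_group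
          hom_FactGroup_some[OF Z1_group Z0_group N1_normal ab_d0_hom ab_d0_N1, folded Q1_def]])
    fix X assume "X \<in> carrier (Q1 C)"
    show "dif (Ab_Cr C) 0 ((Inr \<circ> Inl) X) = Inl (ab_d0 C (SOME z. z \<in> X))"
      by (simp add: dif_Ab_Cr)
  qed
next
  case 2
  show ?thesis unfolding 2 cgr_Ab_Cr(2) cgr_Ab_Cr(3)[of 2, simplified] numeral_2_eq_2[symmetric]
  proof (rule hom_transport_transport[OF inj_Inr_Inr inj_Inr_Inl Qn_group
          hom_FactGroup_some[OF Sn_group Q1_group Nn_normal \<pi>1_ab_d1_hom \<pi>1_ab_d1_Nn, folded Qn_def]])
    fix X assume "X \<in> carrier (Qn 2 C)"
    show "dif (Ab_Cr C) (Suc 0) ((Inr \<circ> Inr) X) = (Inr \<circ> Inl) (\<pi>1 (ab_d1 C (SOME x. x \<in> X)))"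
      by (simp add: dif_Ab_Cr)
  qed simp_all
next
  case 3
  show ?thesis unfolding cgr_Ab_Cr(3)[OF 3] cgr_Ab_Cr(3)[OF le_SucI[OF 3]]
  proof (rule hom_transport_transport[OF inj_Inr_Inr inj_Inr_Inr Qn_group
          hom_FactGroup_some[OF Sn_group Qn_group Nn_normal \<pi>n_ab_dn_hom \<pi>n_ab_dn_Nn, folded Qn_def]])
    fix X assume "X \<in> carrier (Qn (Suc n) C)"
    show "dif (Ab_Cr C) n ((Inr \<circ> Inr) X) = (Inr \<circ> Inr) (\<pi>n n (ab_dn n C (SOME x. x \<in> X)))"
      by (simp add: dif_Ab_Cr 3)
  qed (use 3 in simp_all)
qed

lemma one_Ab_Cr:
  "\<one>\<^bsub>cgr (Ab_Cr C) 0\<^esub> = Inl 0"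
  "\<one>\<^bsub>cgr (Ab_Cr C) (Suc 0)\<^esub> = Inr (Inl \<one>\<^bsub>Q1 C\<^esub>)"
  "2 \<le> n \<Longrightarrow> \<one>\<^bsub>cgr (Ab_Cr C) n\<^esub> = Inr (Inr \<one>\<^bsub>Qn n C\<^esub>)"
  by (simp_all add: cgr_Ab_Cr transport_one)

lemma hom_Ab_Cr_precomp:
  assumes f: "f \<in> hom (cgr (Ab_Cr C) n) H"
  shows "n = 0 \<Longrightarrow> (\<lambda>z. f (Inl z)) \<in> hom (Z0 C) H"
    and "n = Suc 0 \<Longrightarrow> (\<lambda>z. f (Inr (Inl (\<pi>1 z)))) \<in> hom (Z1 C) H"
    and "2 \<le> n \<Longrightarrow> (\<lambda>x. f (Inr (Inr (\<pi>n n x)))) \<in> hom (Sn n C) H"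
proof -
  assume "n = 0"
  then show "(\<lambda>z. f (Inl z)) \<in> hom (Z0 C) H"
    using f by (simp add: cgr_Ab_Cr hom_transport_iff[OF inj_Inl Z0_group])
next
  assume "n = Suc 0"
  then have "(\<lambda>X. f (Inr (Inl X))) \<in> hom (Q1 C) H"
    using f by (simp add: cgr_Ab_Cr hom_transport_iff[OF inj_Inr_Inl Q1_group])
  then show "(\<lambda>z. f (Inr (Inl (\<pi>1 z)))) \<in> hom (Z1 C) H"
    using hom_compose[OF \<pi>1_hom] unfolding o_def by blast
next
  assume n: "2 \<le> n"
  then have "(\<lambda>X. f (Inr (Inr X))) \<in> hom (Qn n C) H"
    using f by (simp add: cgr_Ab_Cr hom_transport_iff[OF inj_Inr_Inr Qn_group])
  then show "(\<lambda>x. f (Inr (Inr (\<pi>n n x)))) \<in> hom (Sn n C) H"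
    using hom_compose[OF \<pi>n_hom[OF n]] unfolding o_def by blast
qed

text \<open>The images of the unit generate \<open>Ab_Cr C\<close> in every degree.\<close>

definition Ab_gens :: "nat \<Rightarrow> ('o, 'm, 'e) ab_elt set" where
  "Ab_gens n =
    (if n = 0 then {Inl (frag_of c) | c. c \<in> obj C}
     else if n = 1 then {Inr (Inl (\<pi>1 (frag_of l))) | l. l \<in> arr C}
     else {Inr (Inr (\<pi>n n (inj_c n C c a))) | c a. c \<in> obj C \<and> a \<in> carrier (cgrp C n c)})"

lemma Ab_hom_eqI:
  assumes H: "group H" and f: "f \<in> hom (cgr (Ab_Cr C) n) H" and g: "g \<in> hom (cgr (Ab_Cr C) n) H"
    and eq: "\<And>y. y \<in> Ab_gens n \<Longrightarrow> f y = g y" and y: "y \<in> carrier (cgr (Ab_Cr C) n)"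
  shows "f y = g y"
proof (cases n rule: degree_cases)
  case 1
  then obtain z where z: "z \<in> carrier (Z0 C)" "y = Inl z" using y by (auto simp: carrier_Ab_Cr)
  have "f (Inl z) = g (Inl z)"
    by (rule Z0_hom_eqI[OF H hom_Ab_Cr_precomp(1)[OF f 1] hom_Ab_Cr_precomp(1)[OF g 1] _ z(1)])
       (use eq 1 in \<open>auto simp: Ab_gens_def\<close>)
  then show ?thesis using z by simp
next
  case 2
  then obtain z where z: "z \<in> carrier (Z1 C)" "y = Inr (Inl (\<pi>1 z))" using y by (auto simp: carrier_Ab_Cr)
  have "f (Inr (Inl (\<pi>1 z))) = g (Inr (Inl (\<pi>1 z)))"
    by (rule Z1_hom_eqI[OF H hom_Ab_Cr_precomp(2)[OF f 2] hom_Ab_Cr_precomp(2)[OF g 2] _ z(1)])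
       (use eq 2 in \<open>auto simp: Ab_gens_def\<close>)
  then show ?thesis using z by simp
next
  case 3
  then obtain x where x: "x \<in> carrier (Sn n C)" "y = Inr (Inr (\<pi>n n x))" using y by (auto simp: carrier_Ab_Cr)
  have "f (Inr (Inr (\<pi>n n x))) = g (Inr (Inr (\<pi>n n x)))"
    by (rule Sn_hom_eqI[OF 3 H hom_Ab_Cr_precomp(3)[OF f 3] hom_Ab_Cr_precomp(3)[OF g 3] _ x(1)])
       (use eq 3 in \<open>auto simp: Ab_gens_def\<close>)
  then show ?thesis using x by simp
qed

lemma dif_Ab_Cr_gens:
  "l \<in> arr C \<Longrightarrow> dif (Ab_Cr C) 0 (Inr (Inl (\<pi>1 (frag_of l)))) = Inl (frag_of (tgt C l) - frag_of (src C l))"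
  "c \<in> obj C \<Longrightarrow> a \<in> carrier (cgrp C 2 c) \<Longrightarrow>
    dif (Ab_Cr C) (Suc 0) (Inr (Inr (\<pi>n 2 (inj_c 2 C c a)))) = Inr (Inl (bd1_class c a))"
  "2 \<le> n \<Longrightarrow> c \<in> obj C \<Longrightarrow> b \<in> carrier (cgrp C (Suc n) c) \<Longrightarrow>
    dif (Ab_Cr C) n (Inr (Inr (\<pi>n (Suc n) (inj_c (Suc n) C c b)))) = Inr (Inr (\<pi>n n (inj_c n C c (bd C n c b))))"
  by (simp_all add: dif_Ab_Cr ab_d0_frag_of \<pi>1_ab_d1_inj_c ab_dn_inj_c inj_c_carrier
      FactGroup_some_rep[OF Z1_group Z0_group N1_subgroup ab_d0_hom ab_d0_N1]
      FactGroup_some_rep[OF Sn_group Q1_group Nn_subgroup \<pi>1_ab_d1_hom \<pi>1_ab_d1_Nn]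
      FactGroup_some_rep[OF Sn_group Qn_group Nn_subgroup \<pi>n_ab_dn_hom \<pi>n_ab_dn_Nn])

lemma \<pi>n_inj_c_one: "2 \<le> n \<Longrightarrow> c \<in> obj C \<Longrightarrow> \<pi>n n (inj_c n C c \<one>\<^bsub>cgrp C n c\<^esub>) = \<one>\<^bsub>Qn n C\<^esub>"
  using hom_one[OF inj_c_hom cgrp_group Sn_group] hom_one[OF \<pi>n_hom Sn_group Qn_group] by simp

lemma dif_dif_Ab_gens:
  assumes y: "y \<in> Ab_gens (Suc (Suc n))"
  shows "dif (Ab_Cr C) n (dif (Ab_Cr C) (Suc n) y) = \<one>\<^bsub>cgr (Ab_Cr C) n\<^esub>"
proof -
  obtain c a where c: "c \<in> obj C" and a: "a \<in> carrier (cgrp C (Suc (Suc n)) c)"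
    and y: "y = Inr (Inr (\<pi>n (Suc (Suc n)) (inj_c (Suc (Suc n)) C c a)))"
    using y by (auto simp: Ab_gens_def)
  show ?thesis
  proof (cases n rule: degree_cases)
    case 1
    then show ?thesis
      using c a by (simp add: y numeral_2_eq_2[symmetric] dif_Ab_Cr_gens one_Ab_Cr bd1_arr src_bd1 tgt_bd1)
  next
    case 2
    have a3: "a \<in> carrier (cgrp C 3 c)" and y3: "y = Inr (Inr (\<pi>n 3 (inj_c 3 C c a)))"
      using a y 2 by (simp_all add: numeral_3_eq_3)
    have "bd C 2 c a \<in> carrier (cgrp C 2 c)" using bd_carrier[of 2 c a] c a3 by simp
    then show ?thesis
      using c a3 2 dif_Ab_Cr_gens(3)[of 2 c a]
      by (simp add: y3 numeral_2_eq_2[symmetric] dif_Ab_Cr_gens(2) one_Ab_Cr bd1_bd \<pi>1_ident)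
  next
    case 3
    then show ?thesis
      using c a by (simp add: y dif_Ab_Cr_gens one_Ab_Cr bd_carrier bd_bd \<pi>n_inj_c_one)
  qed
qed

lemma chain_complex_Ab_Cr: "chain_complex (Ab_Cr C)"
  unfolding chain_complex_def
proof (intro conjI allI ballI comm_group_Ab_Cr dif_Ab_Cr_hom)
  fix n y assume y: "y \<in> carrier (cgr (Ab_Cr C) (Suc (Suc n)))"
  have grp: "group (cgr (Ab_Cr C) n)" using comm_group_Ab_Cr by (rule comm_group.axioms(2))
  show "dif (Ab_Cr C) n (dif (Ab_Cr C) (Suc n) y) = \<one>\<^bsub>cgr (Ab_Cr C) n\<^esub>"
  proof (rule Ab_hom_eqI[OF grp _ trivial_hom[OF grp] dif_dif_Ab_gens y])
    show "(\<lambda>y. dif (Ab_Cr C) n (dif (Ab_Cr C) (Suc n) y)) \<in> hom (cgr (Ab_Cr C) (Suc (Suc n))) (cgr (Ab_Cr C) n)"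
      using hom_compose[OF dif_Ab_Cr_hom dif_Ab_Cr_hom] unfolding o_def .
  qed
qed

lemma mult_Ab_Cr:
  "a \<in> carrier (Z0 C) \<Longrightarrow> b \<in> carrier (Z0 C) \<Longrightarrow> Inl a \<otimes>\<^bsub>cgr (Ab_Cr C) 0\<^esub> Inl b = Inl (a + b)"
  "X \<in> carrier (Q1 C) \<Longrightarrow> Y \<in> carrier (Q1 C) \<Longrightarrow>
    Inr (Inl X) \<otimes>\<^bsub>cgr (Ab_Cr C) (Suc 0)\<^esub> Inr (Inl Y) = Inr (Inl (X \<otimes>\<^bsub>Q1 C\<^esub> Y))"
  using transport_mult[OF inj_Inl, of a "Z0 C" b] transport_mult[OF inj_Inr_Inl, of X "Q1 C" Y]
  by (simp_all add: cgr_Ab_Cr)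

lemma cr_unit_simps:
  "mo (cr_unit C) c = Inl (frag_of c)"
  "mm (cr_unit C) l = (Inl (frag_of (src C l)), Inr (Inl (\<pi>1 (frag_of l))))"
  "me (cr_unit C) n c x = Inr (Inr (\<pi>n n (inj_c n C c x)))"
  by (simp_all add: cr_unit_def)

lemma cr_unit_me_hom:
  assumes n: "2 \<le> n" and c: "c \<in> obj C"
  shows "me (cr_unit C) n c \<in> hom (cgrp C n c) (cgr (Ab_Cr C) n)"
  using hom_compose[OF hom_compose[OF inj_c_hom[OF n c] \<pi>n_hom[OF n]] transport_hom_in[OF inj_Inr_Inr]] n
  by (simp add: cgr_Ab_Cr cr_unit_simps[abs_def] o_def)

lemma cr_morphism_cr_unit: "cr_morphism C (U_Cr (Ab_Cr C)) (cr_unit C)"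
  unfolding cr_morphism_def
proof (intro conjI ballI allI impI)
  fix l assume l: "l \<in> arr C"
  have carriers: "frag_of (src C l) \<in> carrier (Z0 C)" "frag_of (tgt C l) \<in> carrier (Z0 C)"
    "\<pi>1 (frag_of l) \<in> carrier (Q1 C)"
    using l src_obj tgt_obj hom_in_carrier[OF \<pi>1_hom] by simp_all
  then show "mm (cr_unit C) l \<in> arr (U_Cr (Ab_Cr C))"
    by (simp add: cr_unit_simps U_Cr_simps carrier_Ab_Cr(1) cgr_Ab_Cr transport_carrier)
  show "src (U_Cr (Ab_Cr C)) (mm (cr_unit C) l) = mo (cr_unit C) (src C l)"
    by (simp add: cr_unit_simps U_Cr_simps)
  have "frag_of (tgt C l) - frag_of (src C l) \<in> carrier (Z0 C)"
    using carriers by (simp add: keys_diff_subset)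
  then show "tgt (U_Cr (Ab_Cr C)) (mm (cr_unit C) l) = mo (cr_unit C) (tgt C l)"
    using l carriers by (simp add: cr_unit_simps U_Cr_simps dif_Ab_Cr_gens(1) mult_Ab_Cr(1))
next
  fix f g assume fg: "f \<in> arr C" "g \<in> arr C" "tgt C f = src C g"
  then show "mm (cr_unit C) (comp C g f) = comp (U_Cr (Ab_Cr C)) (mm (cr_unit C) g) (mm (cr_unit C) f)"
    using hom_in_carrier[OF \<pi>1_hom]
    by (simp add: cr_unit_simps U_Cr_simps src_comp \<pi>1_comp mult_Ab_Cr(2))
next
  fix c assume "c \<in> obj C"
  then show "mm (cr_unit C) (ident C c) = ident (U_Cr (Ab_Cr C)) (mo (cr_unit C) c)"
    by (simp add: cr_unit_simps U_Cr_simps src_ident \<pi>1_ident one_Ab_Cr)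
next
  fix n :: nat and l x assume "2 \<le> n" "l \<in> arr C" "x \<in> carrier (cgrp C n (src C l))"
  then show "me (cr_unit C) n (tgt C l) (act C n l x) =
      act (U_Cr (Ab_Cr C)) n (mm (cr_unit C) l) (me (cr_unit C) n (src C l) x)"
    by (simp add: cr_unit_simps U_Cr_simps \<pi>n_act)
next
  fix c x assume "c \<in> obj C" "x \<in> carrier (cgrp C 2 c)"
  then show "mm (cr_unit C) (bd1 C c x) = bd1 (U_Cr (Ab_Cr C)) (mo (cr_unit C) c) (me (cr_unit C) 2 c x)"
    by (simp add: cr_unit_simps U_Cr_simps src_bd1 dif_Ab_Cr_gens(2))
next
  fix n :: nat and c x assume "2 \<le> n" "c \<in> obj C" "x \<in> carrier (cgrp C (Suc n) c)"
  then show "me (cr_unit C) n c (bd C n c x) = bd (U_Cr (Ab_Cr C)) n (mo (cr_unit C) c) (me (cr_unit C) (Suc n) c x)"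
    by (simp add: cr_unit_simps U_Cr_simps dif_Ab_Cr_gens(3))
qed (simp_all add: cr_unit_simps U_Cr_simps carrier_Ab_Cr(1) cr_unit_me_hom)

lemma cr_mor_eq_cr_unit_iff:
  "cr_mor_eq C (cr_mor_comp (U_mor g) (cr_unit C)) F \<longleftrightarrow>
    (\<forall>c\<in>obj C. g 0 (Inl (frag_of c)) = mo F c) \<and>
    (\<forall>l\<in>arr C. g 0 (Inl (frag_of (src C l))) = fst (mm F l) \<and> g (Suc 0) (Inr (Inl (\<pi>1 (frag_of l)))) = snd (mm F l)) \<and>
    (\<forall>n\<ge>2. \<forall>c\<in>obj C. \<forall>x\<in>carrier (cgrp C n c). g n (Inr (Inr (\<pi>n n (inj_c n C c x)))) = me F n c x)"
  by (auto simp: cr_mor_eq_def cr_mor_comp_def U_mor_def cr_unit_simps prod_eq_iff)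

end

section \<open>The universal property of the unit\<close>

locale cr_map_to_U = cr_complex C for C :: "('o, 'm, 'e) crossed_cx" +
  fixes A :: "'a chain_cx" and F :: "('o, 'm, 'e, 'a, 'a \<times> 'a, 'a) cr_mor"
  assumes chain: "chain_complex A" and morphism: "cr_morphism C (U_Cr A) F"
begin

lemma A_comm_group: "comm_group (cgr A n)"
  and A_group: "group (cgr A n)"
  and dif_A_hom: "dif A n \<in> hom (cgr A (Suc n)) (cgr A n)"
  using chain_complexD[OF chain] comm_group.axioms(2) by blast+

lemma mo_carrier: "c \<in> obj C \<Longrightarrow> mo F c \<in> carrier (cgr A 0)"
  and mm_carrier: "l \<in> arr C \<Longrightarrow> snd (mm F l) \<in> carrier (cgr A (Suc 0))"
  and fst_mm: "l \<in> arr C \<Longrightarrow> fst (mm F l) = mo F (src C l)"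
  and me_hom: "2 \<le> n \<Longrightarrow> c \<in> obj C \<Longrightarrow> me F n c \<in> hom (cgrp C n c) (cgr A n)"
  and me_act: "2 \<le> n \<Longrightarrow> l \<in> arr C \<Longrightarrow> x \<in> carrier (cgrp C n (src C l)) \<Longrightarrow>
    me F n (tgt C l) (act C n l x) = me F n (src C l) x"
  and mm_bd1: "c \<in> obj C \<Longrightarrow> x \<in> carrier (cgrp C 2 c) \<Longrightarrow> snd (mm F (bd1 C c x)) = dif A (Suc 0) (me F 2 c x)"
  and me_bd: "2 \<le> n \<Longrightarrow> c \<in> obj C \<Longrightarrow> x \<in> carrier (cgrp C (Suc n) c) \<Longrightarrow>
    me F n c (bd C n c x) = dif A n (me F (Suc n) c x)"
  using morphism by (auto simp: cr_morphism_def U_Cr_simps)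

lemma mm_tgt: "l \<in> arr C \<Longrightarrow> mo F (src C l) \<otimes>\<^bsub>cgr A 0\<^esub> dif A 0 (snd (mm F l)) = mo F (tgt C l)"
  using morphism fst_mm[symmetric] by (auto simp: cr_morphism_def U_Cr_simps split: prod.splits)

lemma mm_comp:
  assumes "f \<in> arr C" "g \<in> arr C" "tgt C f = src C g"
  shows "snd (mm F (comp C g f)) = snd (mm F f) \<otimes>\<^bsub>cgr A (Suc 0)\<^esub> snd (mm F g)"
proof -
  have "mm F (comp C g f) = comp (U_Cr A) (mm F g) (mm F f)"
    using morphism assms by (simp add: cr_morphism_def)
  then show ?thesis by (cases "mm F f", cases "mm F g") (simp add: U_Cr_simps)
qed

abbreviation G0 :: "('o \<Rightarrow>\<^sub>0 int) \<Rightarrow> 'a" where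
  "G0 \<equiv> free_lift (cgr A 0) (obj C) (mo F)"

abbreviation G1 :: "('m \<Rightarrow>\<^sub>0 int) \<Rightarrow> 'a" where
  "G1 \<equiv> free_lift (cgr A (Suc 0)) (arr C) (\<lambda>l. snd (mm F l))"

abbreviation Gn :: "nat \<Rightarrow> ('o \<Rightarrow> 'e) \<Rightarrow> 'a" where
  "Gn n \<equiv> sum_group_lift (obj C) (cgr A n) (me F n)"

lemma G0_hom: "G0 \<in> hom (Z0 C) (cgr A 0)"
  unfolding Z0_def by (rule free_lift_hom[OF A_comm_group]) (auto simp: mo_carrier)

lemma G0_frag_of: "c \<in> obj C \<Longrightarrow> G0 (frag_of c) = mo F c"
  by (rule free_lift_frag_of[OF A_comm_group]) (auto simp: mo_carrier)

lemma G1_hom: "G1 \<in> hom (Z1 C) (cgr A (Suc 0))"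
  unfolding Z1_def by (rule free_lift_hom[OF A_comm_group]) (auto simp: mm_carrier)

lemma G1_frag_of: "l \<in> arr C \<Longrightarrow> G1 (frag_of l) = snd (mm F l)"
  by (rule free_lift_frag_of[OF A_comm_group]) (auto simp: mm_carrier)

lemma G1_N1: "z \<in> N1 C \<Longrightarrow> G1 z = \<one>\<^bsub>cgr A (Suc 0)\<^esub>"
  by (rule hom_trivial_on_N1[OF A_comm_group G1_hom])
     (simp_all add: G1_frag_of comp_arr mm_comp)

lemma Gn_hom: "2 \<le> n \<Longrightarrow> Gn n \<in> hom (Sn n C) (cgr A n)"
  unfolding Sn_def by (rule sum_group_lift_hom[OF _ A_comm_group]) (simp_all add: cgrp_group me_hom)

lemma Gn_inj_c: "2 \<le> n \<Longrightarrow> c \<in> obj C \<Longrightarrow> a \<in> carrier (cgrp C n c) \<Longrightarrow> Gn n (inj_c n C c a) = me F n c a"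
  unfolding inj_c_eq_sum_group_inj by (rule sum_group_lift_inj[OF _ A_comm_group]) (simp_all add: cgrp_group me_hom)

lemma Gn_Nn: "2 \<le> n \<Longrightarrow> x \<in> Nn n C \<Longrightarrow> Gn n x = \<one>\<^bsub>cgr A n\<^esub>"
  by (rule hom_trivial_on_Nn[OF _ A_group Gn_hom])
     (simp_all add: Gn_inj_c me_act act_carrier src_obj tgt_obj)

definition transpose_map :: "nat \<Rightarrow> ('o, 'm, 'e) ab_elt \<Rightarrow> 'a" where
  "transpose_map n y = (case y of
      Inl z \<Rightarrow> G0 z
    | Inr (Inl X) \<Rightarrow> G1 (SOME z. z \<in> X)
    | Inr (Inr X) \<Rightarrow> Gn n (SOME x. x \<in> X))"

lemma transpose_map_hom: "transpose_map n \<in> hom (cgr (Ab_Cr C) n) (cgr A n)"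
proof (cases n rule: degree_cases)
  case 1
  show ?thesis unfolding 1 cgr_Ab_Cr hom_transport_iff[OF inj_Inl Z0_group]
    using G0_hom by (simp add: transpose_map_def)
next
  case 2
  have "(\<lambda>X. G1 (SOME z. z \<in> X)) \<in> hom (Q1 C) (cgr A (Suc 0))"
    unfolding Q1_def by (rule hom_FactGroup_some[OF Z1_group A_group N1_normal G1_hom G1_N1])
  then show ?thesis unfolding 2 cgr_Ab_Cr hom_transport_iff[OF inj_Inr_Inl Q1_group]
    by (simp add: transpose_map_def)
next
  case 3
  have "(\<lambda>X. Gn n (SOME x. x \<in> X)) \<in> hom (Qn n C) (cgr A n)"
    unfolding Qn_def by (rule hom_FactGroup_some[OF Sn_group[OF 3] A_group Nn_normal[OF 3] Gn_hom[OF 3] Gn_Nn[OF 3]])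
  then show ?thesis unfolding cgr_Ab_Cr(3)[OF 3] hom_transport_iff[OF inj_Inr_Inr Qn_group[OF 3]]
    by (simp add: transpose_map_def)
qed

lemma transpose_map_gens:
  "c \<in> obj C \<Longrightarrow> transpose_map 0 (Inl (frag_of c)) = mo F c"
  "l \<in> arr C \<Longrightarrow> transpose_map (Suc 0) (Inr (Inl (\<pi>1 (frag_of l)))) = snd (mm F l)"
  "2 \<le> n \<Longrightarrow> c \<in> obj C \<Longrightarrow> a \<in> carrier (cgrp C n c) \<Longrightarrow>
    transpose_map n (Inr (Inr (\<pi>n n (inj_c n C c a)))) = me F n c a"
  by (simp_all add: transpose_map_def G0_frag_of G1_frag_of Gn_inj_c inj_c_carrier
      FactGroup_some_rep[OF Z1_group A_group N1_subgroup G1_hom G1_N1]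
      FactGroup_some_rep[OF Sn_group A_group Nn_subgroup Gn_hom Gn_Nn])

lemma cr_mor_eq_transpose_map: "cr_mor_eq C (cr_mor_comp (U_mor transpose_map) (cr_unit C)) F"
  by (simp add: cr_mor_eq_cr_unit_iff transpose_map_gens src_obj fst_mm)

text \<open>In degree zero, the condition on targets in \<open>U_Cr A\<close> says that \<open>F\<close> commutes with the boundary.\<close>

lemma dif_mm: "l \<in> arr C \<Longrightarrow> dif A 0 (snd (mm F l)) = mo F (tgt C l) \<otimes>\<^bsub>cgr A 0\<^esub> inv\<^bsub>cgr A 0\<^esub> mo F (src C l)"
proof -
  interpret A0: comm_group "cgr A 0" by (rule A_comm_group)
  assume l: "l \<in> arr C"
  then have "mo F (src C l) \<in> carrier (cgr A 0)" "dif A 0 (snd (mm F l)) \<in> carrier (cgr A 0)"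
    using mo_carrier src_obj hom_in_carrier[OF dif_A_hom mm_carrier] by auto
  then show ?thesis
    using mm_tgt[OF l, symmetric] by (simp add: A0.m_comm[of "mo F (src C l)"] A0.m_assoc)
qed

lemma transpose_map_dif_Ab_gens:
  assumes y: "y \<in> Ab_gens (Suc n)"
  shows "transpose_map n (dif (Ab_Cr C) n y) = dif A n (transpose_map (Suc n) y)"
proof (cases n rule: degree_cases)
  case 1
  then obtain l where l: "l \<in> arr C" and y: "y = Inr (Inl (\<pi>1 (frag_of l)))"
    using y by (auto simp: Ab_gens_def)
  have "G0 (frag_of (tgt C l) - frag_of (src C l)) = mo F (tgt C l) \<otimes>\<^bsub>cgr A 0\<^esub> inv\<^bsub>cgr A 0\<^esub> mo F (src C l)"
    using l hom_free_Abelian_group_diff[OF G0_hom[unfolded Z0_def] A_group]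
    by (simp add: src_obj tgt_obj G0_frag_of)
  then show ?thesis
    using l 1 by (simp add: y dif_Ab_Cr_gens transpose_map_gens dif_mm) (simp add: transpose_map_def)
next
  case 2
  then obtain c a where c: "c \<in> obj C" and a: "a \<in> carrier (cgrp C 2 c)"
    and y: "y = Inr (Inr (\<pi>n 2 (inj_c 2 C c a)))"
    using y by (auto simp: Ab_gens_def numeral_2_eq_2)
  show ?thesis
    using c a 2 transpose_map_gens(3)[of 2 c a]
    by (simp add: y dif_Ab_Cr_gens transpose_map_gens bd1_arr mm_bd1 numeral_2_eq_2[symmetric])
next
  case 3
  then obtain c a where c: "c \<in> obj C" and a: "a \<in> carrier (cgrp C (Suc n) c)"
    and y: "y = Inr (Inr (\<pi>n (Suc n) (inj_c (Suc n) C c a)))"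
    using y by (auto simp: Ab_gens_def)
  show ?thesis
    using c a 3 by (simp add: y dif_Ab_Cr_gens transpose_map_gens bd_carrier me_bd)
qed

lemma chain_map_transpose_map: "chain_map (Ab_Cr C) A transpose_map"
  unfolding chain_map_def
proof (intro conjI allI ballI transpose_map_hom)
  fix n y assume y: "y \<in> carrier (cgr (Ab_Cr C) (Suc n))"
  show "transpose_map n (dif (Ab_Cr C) n y) = dif A n (transpose_map (Suc n) y)"
  proof (rule Ab_hom_eqI[OF A_group _ _ transpose_map_dif_Ab_gens y])
    show "(\<lambda>y. transpose_map n (dif (Ab_Cr C) n y)) \<in> hom (cgr (Ab_Cr C) (Suc n)) (cgr A n)"
      using hom_compose[OF dif_Ab_Cr_hom transpose_map_hom] unfolding o_def .
    show "(\<lambda>y. dif A n (transpose_map (Suc n) y)) \<in> hom (cgr (Ab_Cr C) (Suc n)) (cgr A n)"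
      using hom_compose[OF transpose_map_hom dif_A_hom] unfolding o_def .
  qed
qed

lemma transpose_map_unique:
  assumes g: "\<And>n. g n \<in> hom (cgr (Ab_Cr C) n) (cgr A n)"
    and eq: "cr_mor_eq C (cr_mor_comp (U_mor g) (cr_unit C)) F"
    and y: "y \<in> carrier (cgr (Ab_Cr C) n)"
  shows "g n y = transpose_map n y"
proof (rule Ab_hom_eqI[OF A_group g transpose_map_hom _ y])
  fix y assume "y \<in> Ab_gens n"
  then show "g n y = transpose_map n y"
    using eq by (auto simp: Ab_gens_def cr_mor_eq_cr_unit_iff transpose_map_gens split: if_splits)
qed

end

theorem mainTheorem5:
  shows "(\<forall>A :: 'a chain_cx. chain_complex A \<longrightarrow> crossed_complex (U_Cr A)) \<and>
    (\<forall>(A :: 'a chain_cx) (B :: 'b chain_cx) g. chain_complex A \<and> chain_complex B \<and> chain_map A B g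
        \<longrightarrow> cr_morphism (U_Cr A) (U_Cr B) (U_mor g)) \<and>
    (\<forall>C :: ('o, 'm, 'e) crossed_cx. crossed_complex C \<longrightarrow>
       chain_complex (Ab_Cr C) \<and>
       cr_morphism C (U_Cr (Ab_Cr C)) (cr_unit C) \<and>
       (\<forall>(A :: 'a chain_cx) F. chain_complex A \<and> cr_morphism C (U_Cr A) F \<longrightarrow>
          (\<exists>g. chain_map (Ab_Cr C) A g \<and> cr_mor_eq C (cr_mor_comp (U_mor g) (cr_unit C)) F) \<and>
          (\<forall>g g'. chain_map (Ab_Cr C) A g \<and> cr_mor_eq C (cr_mor_comp (U_mor g) (cr_unit C)) F \<and>
                  chain_map (Ab_Cr C) A g' \<and> cr_mor_eq C (cr_mor_comp (U_mor g') (cr_unit C)) F \<longrightarrow>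
                  (\<forall>n. \<forall>x\<in>carrier (cgr (Ab_Cr C) n). g n x = g' n x))))"
proof (intro conjI allI impI ballI)
  show "crossed_complex (U_Cr A)" if "chain_complex A" for A :: "'a chain_cx"
    using that by (rule crossed_complex_U_Cr)
  show "cr_morphism (U_Cr A) (U_Cr B) (U_mor g)"
    if "chain_complex A \<and> chain_complex B \<and> chain_map A B g" for A :: "'a chain_cx" and B :: "'b chain_cx" and g
    using that cr_morphism_U_mor by blast
  fix C :: "('o, 'm, 'e) crossed_cx" assume "crossed_complex C"
  then interpret cr_complex C by unfold_locales
  show "chain_complex (Ab_Cr C)" by (rule chain_complex_Ab_Cr)
  show "cr_morphism C (U_Cr (Ab_Cr C)) (cr_unit C)" by (rule cr_morphism_cr_unit)
  fix A :: "'a chain_cx" and F assume "chain_complex A \<and> cr_morphism C (U_Cr A) F"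
  then interpret cr_map_to_U C A F by unfold_locales blast+
  show "\<exists>g. chain_map (Ab_Cr C) A g \<and> cr_mor_eq C (cr_mor_comp (U_mor g) (cr_unit C)) F"
    using chain_map_transpose_map cr_mor_eq_transpose_map by blast
  fix g g' n x
  assume "chain_map (Ab_Cr C) A g \<and> cr_mor_eq C (cr_mor_comp (U_mor g) (cr_unit C)) F \<and>
    chain_map (Ab_Cr C) A g' \<and> cr_mor_eq C (cr_mor_comp (U_mor g') (cr_unit C)) F"
    and "x \<in> carrier (cgr (Ab_Cr C) n)"
  then show "g n x = g' n x"
    using transpose_map_unique[of g] transpose_map_unique[of g'] by (simp add: chain_map_def)
qed

end
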